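(* Let $(W,S)$ be an irreducible finite Coxeter system which is not of rank two with $m_{s,t}$ even (i.e. $B_W$ is not of the form $\langle a,b\mid (ab)^m=(ba)^m\rangle$ with $m\geq 2$), and let $B_W$ be the associated Artin–Tits group. Then (i) $\Gamma_1(B_W)/\Gamma_2(B_W)$ is isomorphic to $\mathbb{Z}$ or $\mathbb{Z}^2$, and (ii) $\Gamma_2(B_W)=\Gamma_3(B_W)$.
   Context: For a Coxeter system $(W,S)$, $m_{s,t}$ denotes the order of $st$ in $W$. The Artin–Tits group is $B_W=\langle S\mid \underbrace{sts\cdots}_{m_{s,t}}=\underbrace{tst\cdots}_{m_{s,t}} \text{ for all } s\neq t\in S \text{ with } m_{s,t}<\infty\rangle$; it is of spherical type when $W$ is finite. $\Gamma_1(G)=G$, $\Gamma_i(G)=[G,\Gamma_{i-1}(G)]$. *)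

theory Defs
  imports "HOL-Algebra.Algebra"
begin

text \<open>Words in the generators and their inverses: a letter is (s, True) for s
  and (s, False) for s^-1.\<close>
type_synonym 'a word = "('a \<times> bool) list"

definition words :: "'a set \<Rightarrow> 'a word set" where
  "words S = {w. \<forall>x\<in>set w. fst x \<in> S}"

inductive_set pres_eq :: "'a set \<Rightarrow> ('a word \<times> 'a word) set \<Rightarrow> ('a word \<times> 'a word) set"
  for S R where
  refl: "w \<in> words S \<Longrightarrow> (w, w) \<in> pres_eq S R"
| sym: "(u, v) \<in> pres_eq S R \<Longrightarrow> (v, u) \<in> pres_eq S R"
| trans: "(u, v) \<in> pres_eq S R \<Longrightarrow> (v, w) \<in> pres_eq S R \<Longrightarrow> (u, w) \<in> pres_eq S R"
| cancel: "u \<in> words S \<Longrightarrow> v \<in> words S \<Longrightarrow> x \<in> S \<Longrightarrow>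
     (u @ [(x, b), (x, \<not> b)] @ v, u @ v) \<in> pres_eq S R"
| rel: "(l, r) \<in> R \<Longrightarrow> u \<in> words S \<Longrightarrow> v \<in> words S \<Longrightarrow>
     (u @ l @ v, u @ r @ v) \<in> pres_eq S R"

definition presented_group :: "'a set \<Rightarrow> ('a word \<times> 'a word) set \<Rightarrow> 'a word set monoid" where
  "presented_group S R =
    \<lparr>carrier = {pres_eq S R `` {w} | w. w \<in> words S},
     monoid.mult = (\<lambda>A B. \<Union>a\<in>A. \<Union>b\<in>B. pres_eq S R `` {a @ b}),
     one = pres_eq S R `` {[]}\<rparr>"

fun alt :: "'a \<Rightarrow> 'a \<Rightarrow> nat \<Rightarrow> 'a word" where
  "alt s t 0 = []"
| "alt s t (Suc n) = (s, True) # alt t s n"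

text \<open>Coxeter matrix on S; the value 0 encodes m_{s,t} = \<infinity>.\<close>
definition coxeter_matrix :: "'a set \<Rightarrow> ('a \<Rightarrow> 'a \<Rightarrow> nat) \<Rightarrow> bool" where
  "coxeter_matrix S M \<longleftrightarrow>
     (\<forall>s\<in>S. M s s = 1) \<and>
     (\<forall>s\<in>S. \<forall>t\<in>S. M s t = M t s) \<and>
     (\<forall>s\<in>S. \<forall>t\<in>S. s \<noteq> t \<longrightarrow> (M s t = 0 \<or> M s t \<ge> 2))"

definition braid_rels :: "'a set \<Rightarrow> ('a \<Rightarrow> 'a \<Rightarrow> nat) \<Rightarrow> ('a word \<times> 'a word) set" where
  "braid_rels S M = {(alt s t (M s t), alt t s (M s t)) | s t. s \<in> S \<and> t \<in> S \<and> s \<noteq> t \<and> M s t \<noteq> 0}"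

text \<open>Coxeter group W: s^2 = 1 plus braid relations (equivalent to (st)^m = 1).\<close>
definition coxeter_group :: "'a set \<Rightarrow> ('a \<Rightarrow> 'a \<Rightarrow> nat) \<Rightarrow> 'a word set monoid" where
  "coxeter_group S M =
     presented_group S (braid_rels S M \<union> {([(s, True), (s, True)], []) | s. s \<in> S})"

definition artin_tits_group :: "'a set \<Rightarrow> ('a \<Rightarrow> 'a \<Rightarrow> nat) \<Rightarrow> 'a word set monoid" where
  "artin_tits_group S M = presented_group S (braid_rels S M)"

definition coxeter_irreducible :: "'a set \<Rightarrow> ('a \<Rightarrow> 'a \<Rightarrow> nat) \<Rightarrow> bool" where
  "coxeter_irreducible S M \<longleftrightarrow> S \<noteq> {} \<and>
     (\<forall>s\<in>S. \<forall>t\<in>S. (s, t) \<in> ({(x, y). x \<in> S \<and> y \<in> S \<and> x \<noteq> y \<and> M x y \<noteq> 2})\<^sup>*)"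

text \<open>Lower central series, 1-indexed: Gamma_1 = G, Gamma_{i+1} = [G, Gamma_i].
  (Index 0 is set equal to G as well.)\<close>
fun lower_central :: "('g, 'b) monoid_scheme \<Rightarrow> nat \<Rightarrow> 'g set" where
  "lower_central G 0 = carrier G"
| "lower_central G (Suc 0) = carrier G"
| "lower_central G (Suc (Suc n)) =
     generate G {x \<otimes>\<^bsub>G\<^esub> y \<otimes>\<^bsub>G\<^esub> inv\<^bsub>G\<^esub> x \<otimes>\<^bsub>G\<^esub> inv\<^bsub>G\<^esub> y | x y.
                 x \<in> carrier G \<and> y \<in> lower_central G (Suc n)}"

end

(*
  Generators s, t with m(s,t) odd are conjugate in B_W, and exponent sums over a class of the
  equivalence relation they generate (an "odd class") are invariant under the braid relations;
  hence B_W/Gamma_2 is free abelian on the odd classes.  Modulo Gamma_3 the subgroup Gamma_2 is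
  central, so generators in one odd class agree up to central elements; if any two odd classes
  contain commuting generators (m = 2), all generators commute modulo Gamma_3, so Gamma_2 = Gamma_3.

  For finite irreducible W there are at most two odd classes, and distinct ones contain commuting
  generators unless W has rank two with m even.  Both facts come from positivity of the Coxeter
  form B: averaging over the finite image of the geometric representation gives an inner product
  for which all reflections are orthogonal, so no nonzero v >= 0 has B(e_t, v) <= 0 on its
  support.  Explicit such v exclude a triangle with one odd and two "heavy" (even, m /= 2) edges,
  and a path of odd edges with heavy edges at both ends.
*)

theory Submission
  imports Defs Complex_Main
begin

lemma rtrancl_exits:
  assumes "(x, y) \<in> R\<^sup>*" "x \<in> A" "y \<notin> A"
  shows "\<exists>a b. a \<in> A \<and> b \<notin> A \<and> (a, b) \<in> R"
  using assms by (induction rule: rtrancl_induct) blast+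

section \<open>Words, exponent sums and evaluation\<close>

lemma words_append [simp]: "u @ v \<in> words S \<longleftrightarrow> u \<in> words S \<and> v \<in> words S"
  by (auto simp: words_def)

lemma words_Cons [simp]: "x # v \<in> words S \<longleftrightarrow> fst x \<in> S \<and> v \<in> words S"
  by (auto simp: words_def)

lemma words_Nil [simp]: "[] \<in> words S"
  by (simp add: words_def)

lemma words_replicate: "x \<in> S \<Longrightarrow> replicate n (x, b) \<in> words S"
  by (induction n) auto

lemma alt_words: "s \<in> S \<Longrightarrow> t \<in> S \<Longrightarrow> alt s t n \<in> words S"
  by (induction n arbitrary: s t) auto

lemma alt_Suc_snoc: "alt s t (Suc n) = alt s t n @ [(if even n then s else t, True)]"
  by (induction n arbitrary: s t) auto

definition word_inv :: "'a word \<Rightarrow> 'a word" where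
  "word_inv w = rev (map (\<lambda>(x, b). (x, \<not> b)) w)"

lemma word_inv_Nil [simp]: "word_inv [] = []"
  by (simp add: word_inv_def)

lemma word_inv_Cons [simp]: "word_inv ((x, b) # w) = word_inv w @ [(x, \<not> b)]"
  by (simp add: word_inv_def)

lemma words_word_inv [simp]: "word_inv w \<in> words S \<longleftrightarrow> w \<in> words S"
  by (auto simp: word_inv_def words_def)

definition eval_word :: "('g, 'b) monoid_scheme \<Rightarrow> ('a \<Rightarrow> 'g) \<Rightarrow> 'a word \<Rightarrow> 'g" where
  "eval_word G g w = foldr (\<lambda>(x, b) y. (if b then g x else inv\<^bsub>G\<^esub> (g x)) \<otimes>\<^bsub>G\<^esub> y) w \<one>\<^bsub>G\<^esub>"

lemma eval_word_Nil [simp]: "eval_word G g [] = \<one>\<^bsub>G\<^esub>"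
  by (simp add: eval_word_def)

lemma eval_word_Cons [simp]:
  "eval_word G g ((x, b) # w) = (if b then g x else inv\<^bsub>G\<^esub> (g x)) \<otimes>\<^bsub>G\<^esub> eval_word G g w"
  by (simp add: eval_word_def)

fun exp_sum :: "('a \<Rightarrow> bool) \<Rightarrow> 'a word \<Rightarrow> int" where
  "exp_sum P [] = 0"
| "exp_sum P ((x, b) # w) = (if P x then (if b then 1 else -1) else 0) + exp_sum P w"

lemma exp_sum_append [simp]: "exp_sum P (u @ v) = exp_sum P u + exp_sum P v"
  by (induction P u rule: exp_sum.induct) auto

lemma exp_sum_replicate [simp]:
  "exp_sum P (replicate n (x, b)) = (if P x then (if b then int n else - int n) else 0)"
  by (induction n) auto

lemma exp_sum_alt_swap:
  assumes "P s = P t \<or> even n"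
  shows "exp_sum P (alt s t n) = exp_sum P (alt t s n)"
  using assms
proof (induction n arbitrary: s t rule: less_induct)
  case (less n)
  show ?case
  proof (cases n)
    case (Suc k)
    show ?thesis
    proof (cases "P s = P t")
      case True
      then show ?thesis using less Suc by simp
    next
      case False
      with less.prems Suc obtain j where "n = Suc (Suc j)" "even j"
        by (cases k) auto
      then show ?thesis using less by simp
    qed
  qed simp
qed

definition power_word :: "'a \<Rightarrow> int \<Rightarrow> 'a word" where
  "power_word x n = (if 0 \<le> n then replicate (nat n) (x, True) else replicate (nat (- n)) (x, False))"

lemma exp_sum_power_word [simp]: "exp_sum P (power_word x n) = (if P x then n else 0)"
  by (simp add: power_word_def)

lemma power_word_words: "x \<in> S \<Longrightarrow> power_word x n \<in> words S"
  by (simp add: power_word_def words_replicate)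

lemma exp_sum_False [simp]: "exp_sum (\<lambda>x. False) w = 0"
  by (induction "\<lambda>x::'a. False" w rule: exp_sum.induct) simp_all

context group
begin

lemma commute_inv_right: "a \<in> carrier G \<Longrightarrow> b \<in> carrier G \<Longrightarrow> a \<otimes> b = b \<otimes> a \<Longrightarrow> a \<otimes> inv b = inv b \<otimes> a"
  by (metis inv_closed inv_solve_left' inv_solve_right m_assoc m_closed)

lemma eval_word_closed: "g ` S \<subseteq> carrier G \<Longrightarrow> w \<in> words S \<Longrightarrow> eval_word G g w \<in> carrier G"
  by (induction w) auto

lemma eval_word_commute:
  assumes g: "g ` S \<subseteq> carrier G" and c: "c \<in> carrier G"
    and comm: "\<And>s. s \<in> S \<Longrightarrow> c \<otimes> g s = g s \<otimes> c" and w: "w \<in> words S"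
  shows "c \<otimes> eval_word G g w = eval_word G g w \<otimes> c"
  using w
proof (induction w)
  case (Cons a w)
  obtain x b where a: "a = (x, b)" by (cases a)
  with Cons.prems have x: "x \<in> S" and w: "w \<in> words S" by auto
  define l where "l = (if b then g x else inv (g x))"
  have gx: "g x \<in> carrier G" using g x by auto
  have l: "l \<in> carrier G" using gx by (simp add: l_def)
  have w_closed: "eval_word G g w \<in> carrier G" using eval_word_closed[OF g w] .
  have "c \<otimes> l = l \<otimes> c"
    using comm[OF x] c gx by (auto simp: l_def commute_inv_right)
  then have "c \<otimes> (l \<otimes> eval_word G g w) = l \<otimes> (eval_word G g w \<otimes> c)"
    using Cons.IH[OF w] c l w_closed by (metis m_assoc)
  then show ?case using c l w_closed by (simp add: a l_def[symmetric] m_assoc)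
qed (simp add: c)

lemma eval_words_commute:
  assumes g: "g ` S \<subseteq> carrier G" and comm: "\<And>s t. s \<in> S \<Longrightarrow> t \<in> S \<Longrightarrow> g s \<otimes> g t = g t \<otimes> g s"
    and u: "u \<in> words S" and v: "v \<in> words S"
  shows "eval_word G g u \<otimes> eval_word G g v = eval_word G g v \<otimes> eval_word G g u"
proof (rule eval_word_commute[OF g eval_word_closed[OF g u] _ v])
  fix s assume s: "s \<in> S"
  have "g s \<otimes> eval_word G g u = eval_word G g u \<otimes> g s"
    using eval_word_commute[OF g _ _ u] comm s g by blast
  then show "eval_word G g u \<otimes> g s = g s \<otimes> eval_word G g u" by simp
qed

end

lemma (in group_hom) eval_word_hom:
  assumes g: "g ` S \<subseteq> carrier G" and w: "w \<in> words S"
  shows "h (eval_word G g w) = eval_word H (h \<circ> g) w"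
  using w
proof (induction w)
  case (Cons a w)
  obtain x b where a: "a = (x, b)" by (cases a)
  with Cons.prems have "g x \<in> carrier G" "eval_word G g w \<in> carrier G"
    using g G.eval_word_closed by auto
  with Cons a show ?case by auto
qed simp

lemma (in comm_group) eval_word_two_valued:
  assumes ga: "ga \<in> carrier G" and gb: "gb \<in> carrier G"
    and g: "\<And>x. x \<in> S \<Longrightarrow> g x = (if P x then ga else gb)" and w: "w \<in> words S"
  shows "eval_word G g w = ga [^] exp_sum P w \<otimes> gb [^] exp_sum (\<lambda>x. \<not> P x) w"
  using w
proof (induction w)
  case (Cons a w)
  obtain x b where a: "a = (x, b)" by (cases a)
  with Cons.prems have x: "x \<in> S" and w: "w \<in> words S" by auto
  have pow_shift: "h [^] (1 + e) = h \<otimes> h [^] e" "h [^] (e - 1) = inv h \<otimes> h [^] e"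
    if h: "h \<in> carrier G" for h and e :: int
  proof -
    show "h [^] (1 + e) = h \<otimes> h [^] e" by (subst int_pow_mult[OF h]) (simp add: h)
    have "h [^] (- 1 + e) = inv h \<otimes> h [^] e" by (subst int_pow_mult[OF h]) (simp add: h int_pow_neg)
    then show "h [^] (e - 1) = inv h \<otimes> h [^] e" by (simp add: add.commute)
  qed
  show ?case
    using Cons.IH[OF w] g[OF x] pow_shift[OF ga] pow_shift[OF gb] ga gb
    by (auto simp: a m_assoc m_lcomm)
qed simp

section \<open>Commutators and the lower central series\<close>

lemma lower_central_2: "lower_central G 2 = derived G (carrier G)"
  unfolding derived_def numeral_2_eq_2 by (simp, rule arg_cong[where f = "generate G"]) blast

lemma lower_central_3:
  "lower_central G 3 = generate G {x \<otimes>\<^bsub>G\<^esub> y \<otimes>\<^bsub>G\<^esub> inv\<^bsub>G\<^esub> x \<otimes>\<^bsub>G\<^esub> inv\<^bsub>G\<^esub> y | x y.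
     x \<in> carrier G \<and> y \<in> lower_central G 2}"
  by (simp add: numeral_3_eq_3 numeral_2_eq_2)

context group
begin

lemma inv_mult_cancel_left [simp]: "a \<in> carrier G \<Longrightarrow> b \<in> carrier G \<Longrightarrow> inv a \<otimes> (a \<otimes> b) = b"
  by (simp add: m_assoc [symmetric])

lemma mult_inv_cancel_left [simp]: "a \<in> carrier G \<Longrightarrow> b \<in> carrier G \<Longrightarrow> a \<otimes> (inv a \<otimes> b) = b"
  by (simp add: m_assoc [symmetric])

lemma lower_central_2_normal: "lower_central G 2 \<lhd> G"
  unfolding lower_central_2 by (rule derived_self_is_normal)

lemma lower_central_2_subgroup: "subgroup (lower_central G 2) G"
  using lower_central_2_normal normal_imp_subgroup by blast

lemma lower_central_2_subset: "lower_central G 2 \<subseteq> carrier G"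
  using lower_central_2_subgroup subgroup.subset by blast

lemma commutator_in_lower_central_2:
  "x \<in> carrier G \<Longrightarrow> y \<in> carrier G \<Longrightarrow> x \<otimes> y \<otimes> inv x \<otimes> inv y \<in> lower_central G 2"
  unfolding lower_central_2 derived_def by (rule generate.incl) blast

lemma comm_group_Mod_lower_central_2: "comm_group (G Mod lower_central G 2)"
  unfolding lower_central_2 by (rule derived_quot_is_comm_group)

lemma commutator_in_lower_central_3:
  "x \<in> carrier G \<Longrightarrow> y \<in> lower_central G 2 \<Longrightarrow> x \<otimes> y \<otimes> inv x \<otimes> inv y \<in> lower_central G 3"
  unfolding lower_central_3 by (rule generate.incl) blast

lemma lower_central_3_subset_2: "lower_central G 3 \<subseteq> lower_central G 2"
  unfolding lower_central_3
  by (rule generate_subgroup_incl[OF _ lower_central_2_subgroup])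
    (use commutator_in_lower_central_2 lower_central_2_subset in blast)

lemma conj_commutator:
  assumes "g \<in> carrier G" "x \<in> carrier G" "y \<in> carrier G"
  shows "g \<otimes> (x \<otimes> y \<otimes> inv x \<otimes> inv y) \<otimes> inv g =
    (g \<otimes> x \<otimes> inv g) \<otimes> (g \<otimes> y \<otimes> inv g) \<otimes> inv (g \<otimes> x \<otimes> inv g) \<otimes> inv (g \<otimes> y \<otimes> inv g)"
  using assms by (simp add: m_assoc inv_mult_group)

lemma lower_central_3_normal: "lower_central G 3 \<lhd> G"
  unfolding lower_central_3
proof (rule normal_generateI)
  interpret N: normal "lower_central G 2" G by (rule lower_central_2_normal)
  show "{x \<otimes> y \<otimes> inv x \<otimes> inv y | x y. x \<in> carrier G \<and> y \<in> lower_central G 2} \<subseteq> carrier G"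
    using N.subset by auto
  fix h g
  assume "h \<in> {x \<otimes> y \<otimes> inv x \<otimes> inv y | x y. x \<in> carrier G \<and> y \<in> lower_central G 2}"
    and g: "g \<in> carrier G"
  then obtain x y where xy: "x \<in> carrier G" "y \<in> lower_central G 2" "h = x \<otimes> y \<otimes> inv x \<otimes> inv y"
    by auto
  then have "g \<otimes> h \<otimes> inv g =
    (g \<otimes> x \<otimes> inv g) \<otimes> (g \<otimes> y \<otimes> inv g) \<otimes> inv (g \<otimes> x \<otimes> inv g) \<otimes> inv (g \<otimes> y \<otimes> inv g)"
    using conj_commutator g N.subset by blast
  moreover have "g \<otimes> y \<otimes> inv g \<in> lower_central G 2" using N.inv_op_closed2[OF g xy(2)] .
  ultimately show "g \<otimes> h \<otimes> inv g \<in> {x \<otimes> y \<otimes> inv x \<otimes> inv y | x y. x \<in> carrier G \<and> y \<in> lower_central G 2}"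
    using g xy(1) by blast
qed

lemma commutator_in_normal_iff:
  assumes N: "N \<lhd> G" and x: "x \<in> carrier G" and y: "y \<in> carrier G"
  shows "x \<otimes> y \<otimes> inv x \<otimes> inv y \<in> N \<longleftrightarrow>
    (N #> x) \<otimes>\<^bsub>G Mod N\<^esub> (N #> y) = (N #> y) \<otimes>\<^bsub>G Mod N\<^esub> (N #> x)"
proof -
  interpret N: normal N G by (rule N)
  have "x \<otimes> y \<otimes> inv x \<otimes> inv y = (x \<otimes> y) \<otimes> inv (y \<otimes> x)"
    using x y by (simp add: m_assoc inv_mult_group)
  then have "x \<otimes> y \<otimes> inv x \<otimes> inv y \<in> N \<longleftrightarrow> N #> ((x \<otimes> y) \<otimes> inv (y \<otimes> x)) = N"
    using x y coset_join1 coset_join2 N.subgroup_axioms by (metis inv_closed m_closed)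
  also have "\<dots> \<longleftrightarrow> N #> (x \<otimes> y) = N #> (y \<otimes> x)"
    using x y coset_mult_inv1 coset_mult_inv2 N.subset by (meson m_closed)
  finally show ?thesis using x y by (simp add: N.rcos_sum)
qed

lemma commute_mult_central:
  assumes a: "a \<in> carrier G" and b: "b \<in> carrier G" and c: "c \<in> carrier G" and d: "d \<in> carrier G"
    and ab: "a \<otimes> b = b \<otimes> a"
    and c_central: "\<And>x. x \<in> carrier G \<Longrightarrow> c \<otimes> x = x \<otimes> c"
    and d_central: "\<And>x. x \<in> carrier G \<Longrightarrow> d \<otimes> x = x \<otimes> d"
  shows "(a \<otimes> c) \<otimes> (b \<otimes> d) = (b \<otimes> d) \<otimes> (a \<otimes> c)"
proof -
  have "(a \<otimes> c) \<otimes> (b \<otimes> d) = (a \<otimes> b) \<otimes> (c \<otimes> d)"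
    using a b c d c_central[OF b] by (metis m_assoc m_closed)
  also have "\<dots> = (b \<otimes> a) \<otimes> (d \<otimes> c)" using ab c_central[OF d] by simp
  also have "\<dots> = (b \<otimes> d) \<otimes> (a \<otimes> c)"
    using a b c d d_central[OF a] by (metis m_assoc m_closed)
  finally show ?thesis .
qed

lemma conj_in_lower_central_2_coset:
  assumes g: "g \<in> carrier G" and s: "s \<in> carrier G"
  shows "\<exists>d\<in>lower_central G 2. g \<otimes> s \<otimes> inv g = s \<otimes> d"
proof
  let ?d = "inv s \<otimes> g \<otimes> inv (inv s) \<otimes> inv g"
  show "?d \<in> lower_central G 2" using commutator_in_lower_central_2[OF inv_closed[OF s] g] .
  show "g \<otimes> s \<otimes> inv g = s \<otimes> ?d" using g s by (simp add: m_assoc)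
qed

lemma comm_group_if_generators_commute:
  assumes gen: "carrier G = eval_word G g ` words S" and g: "g ` S \<subseteq> carrier G"
    and comm: "\<And>s t. s \<in> S \<Longrightarrow> t \<in> S \<Longrightarrow> g s \<otimes> g t = g t \<otimes> g s"
  shows "comm_group G"
proof (rule group_comm_groupI)
  fix x y
  assume "x \<in> carrier G" "y \<in> carrier G"
  then obtain u v where "u \<in> words S" "v \<in> words S" "x = eval_word G g u" "y = eval_word G g v"
    using gen by auto
  then show "x \<otimes> y = y \<otimes> x" using eval_words_commute[OF g comm] by simp
qed

end

lemma (in group_hom) eval_word_generates_image:
  assumes surj: "h ` carrier G = carrier H"
    and gen: "carrier G = eval_word G g ` words S" and g: "g ` S \<subseteq> carrier G"
  shows "carrier H = eval_word H (h \<circ> g) ` words S"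
proof -
  have "carrier H = (\<lambda>w. h (eval_word G g w)) ` words S"
    using surj gen by (simp add: image_image)
  also have "\<dots> = eval_word H (h \<circ> g) ` words S"
    using eval_word_hom[OF g] by simp
  finally show ?thesis .
qed

lemma (in normal) rcos_surj: "(\<lambda>x. H #> x) ` carrier G = carrier (G Mod H)"
  by (auto simp: carrier_FactGroup RCOSETS_def)

lemma (in normal) rcos_group_hom: "group_hom G (G Mod H) (\<lambda>x. H #> x)"
  using r_coset_hom_Mod factorgroup_is_group by (simp add: group_hom_def group_hom_axioms_def is_group)

lemma (in group) commute_mod_lower_central_3:
  assumes a: "a \<in> carrier G" and b: "b \<in> carrier G" and ab: "a \<otimes> b = b \<otimes> a"
    and d: "d \<in> lower_central G 2" and e: "e \<in> lower_central G 2"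
  shows "(a \<otimes> d) \<otimes> (b \<otimes> e) \<otimes> inv (a \<otimes> d) \<otimes> inv (b \<otimes> e) \<in> lower_central G 3"
proof -
  interpret N: normal "lower_central G 3" G by (rule lower_central_3_normal)
  let ?Q = "G Mod lower_central G 3" and ?p = "\<lambda>x. lower_central G 3 #> x"
  interpret p: group_hom G ?Q ?p by (rule N.rcos_group_hom)
  have de: "d \<in> carrier G" "e \<in> carrier G" using d e lower_central_2_subset by auto
  have central: "?p z \<otimes>\<^bsub>?Q\<^esub> q = q \<otimes>\<^bsub>?Q\<^esub> ?p z" if z: "z \<in> lower_central G 2" and q: "q \<in> carrier ?Q" for z q
  proof -
    obtain x where x: "x \<in> carrier G" "q = ?p x" using q N.rcos_surj by (metis imageE)
    then show ?thesis
      using commutator_in_normal_iff[OF lower_central_3_normal x(1), of z] commutator_in_lower_central_3[OF x(1) z]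
        z lower_central_2_subset by auto
  qed
  have "?p a \<otimes>\<^bsub>?Q\<^esub> ?p b = ?p b \<otimes>\<^bsub>?Q\<^esub> ?p a"
    using ab p.hom_mult[OF a b] p.hom_mult[OF b a] by simp
  then have "(?p a \<otimes>\<^bsub>?Q\<^esub> ?p d) \<otimes>\<^bsub>?Q\<^esub> (?p b \<otimes>\<^bsub>?Q\<^esub> ?p e) = (?p b \<otimes>\<^bsub>?Q\<^esub> ?p e) \<otimes>\<^bsub>?Q\<^esub> (?p a \<otimes>\<^bsub>?Q\<^esub> ?p d)"
    by (rule p.H.commute_mult_central[OF p.hom_closed[OF a] p.hom_closed[OF b] p.hom_closed[OF de(1)]
          p.hom_closed[OF de(2)] _ central[OF d] central[OF e]])
  then have "?p (a \<otimes> d) \<otimes>\<^bsub>?Q\<^esub> ?p (b \<otimes> e) = ?p (b \<otimes> e) \<otimes>\<^bsub>?Q\<^esub> ?p (a \<otimes> d)"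
    using a b de by (simp only: p.hom_mult)
  then show ?thesis
    using commutator_in_normal_iff[OF lower_central_3_normal, of "a \<otimes> d" "b \<otimes> e"] a b de by simp
qed

lemma (in group) lower_central_2_eq_3_if_generators_commute:
  assumes gen: "carrier G = eval_word G g ` words S" and g: "g ` S \<subseteq> carrier G"
    and comm: "\<And>s t. s \<in> S \<Longrightarrow> t \<in> S \<Longrightarrow> g s \<otimes> g t \<otimes> inv (g s) \<otimes> inv (g t) \<in> lower_central G 3"
  shows "lower_central G 2 = lower_central G 3"
proof -
  interpret N: normal "lower_central G 3" G by (rule lower_central_3_normal)
  let ?Q = "G Mod lower_central G 3" and ?p = "\<lambda>x. lower_central G 3 #> x"
  interpret p: group_hom G ?Q ?p by (rule N.rcos_group_hom)
  have "comm_group ?Q"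
  proof (rule p.H.comm_group_if_generators_commute)
    show "carrier ?Q = eval_word ?Q (?p \<circ> g) ` words S"
      by (rule p.eval_word_generates_image[OF N.rcos_surj gen g])
    show "(?p \<circ> g) ` S \<subseteq> carrier ?Q" using g by auto
    fix s t
    assume "s \<in> S" "t \<in> S"
    then show "(?p \<circ> g) s \<otimes>\<^bsub>?Q\<^esub> (?p \<circ> g) t = (?p \<circ> g) t \<otimes>\<^bsub>?Q\<^esub> (?p \<circ> g) s"
      using commutator_in_normal_iff[OF lower_central_3_normal, of "g s" "g t"] comm g by auto
  qed
  then have "lower_central G 2 \<subseteq> lower_central G 3"
    using derived_minimal[OF lower_central_3_normal] by (simp add: lower_central_2)
  then show ?thesis using lower_central_3_subset_2 by blast
qed

lemma comm_group_int_int: "comm_group (integer_group \<times>\<times> integer_group)"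
  by (rule group.group_comm_groupI[OF DirProd_group[OF group_integer_group group_integer_group]])
    (auto simp: add.commute)

section \<open>Presented groups\<close>

locale presentation =
  fixes S :: "'a set" and R :: "('a word \<times> 'a word) set"
  assumes relators_words: "(l, r) \<in> R \<Longrightarrow> l \<in> words S \<and> r \<in> words S"
begin

lemma pres_eq_words: "(u, v) \<in> pres_eq S R \<Longrightarrow> u \<in> words S \<and> v \<in> words S"
  by (induction rule: pres_eq.induct) (auto dest: relators_words)

lemma pres_eq_append_left: "(u, v) \<in> pres_eq S R \<Longrightarrow> w \<in> words S \<Longrightarrow> (w @ u, w @ v) \<in> pres_eq S R"
proof (induction rule: pres_eq.induct)
  case (cancel u v x b)
  then show ?case using pres_eq.cancel[of "w @ u" S v x b R] by simp
next
  case (rel l r u v)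
  then show ?case using pres_eq.rel[of l r R "w @ u" S v] by simp
qed (auto intro: pres_eq.intros)

lemma pres_eq_append_right: "(u, v) \<in> pres_eq S R \<Longrightarrow> w \<in> words S \<Longrightarrow> (u @ w, v @ w) \<in> pres_eq S R"
proof (induction rule: pres_eq.induct)
  case (cancel u v x b)
  then show ?case using pres_eq.cancel[of u S "v @ w" x b R] by simp
next
  case (rel l r u v)
  then show ?case using pres_eq.rel[of l r R u S "v @ w"] by simp
qed (auto intro: pres_eq.intros)

lemma pres_eq_append: "(u, v) \<in> pres_eq S R \<Longrightarrow> (u', v') \<in> pres_eq S R \<Longrightarrow> (u @ u', v @ v') \<in> pres_eq S R"
  by (meson pres_eq_append_left pres_eq_append_right pres_eq_words pres_eq.trans)

lemma pres_eq_word_inv_cancel: "w \<in> words S \<Longrightarrow> (word_inv w @ w, []) \<in> pres_eq S R"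
proof (induction w)
  case Nil
  then show ?case by (simp add: pres_eq.refl)
next
  case (Cons a w)
  obtain x b where a: "a = (x, b)" by (cases a)
  with Cons.prems have x: "x \<in> S" and w: "w \<in> words S" by auto
  have "(word_inv w @ [(x, \<not> b), (x, \<not> \<not> b)] @ w, word_inv w @ w) \<in> pres_eq S R"
    using x w by (intro pres_eq.cancel) auto
  then show ?case using Cons.IH[OF w] pres_eq.trans by (auto simp: a)
qed

definition word_class :: "'a word \<Rightarrow> 'a word set" where
  "word_class w = pres_eq S R `` {w}"

lemma word_class_eq_iff: "u \<in> words S \<Longrightarrow> word_class u = word_class v \<longleftrightarrow> (u, v) \<in> pres_eq S R"
  unfolding word_class_def by (auto intro: pres_eq.refl pres_eq.sym pres_eq.trans)

lemma word_class_eqI: "(u, v) \<in> pres_eq S R \<Longrightarrow> word_class u = word_class v"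
  using word_class_eq_iff pres_eq_words by blast

lemma word_class_relator: "(l, r) \<in> R \<Longrightarrow> word_class l = word_class r"
  using pres_eq.rel[of l r R "[]" S "[]"] by (simp add: word_class_eqI)

lemma mem_word_class: "w \<in> words S \<Longrightarrow> w \<in> word_class w"
  by (simp add: word_class_def pres_eq.refl)

lemma mem_word_class_iff: "u \<in> word_class w \<longleftrightarrow> (w, u) \<in> pres_eq S R"
  by (simp add: word_class_def)

lemma carrier_presented_group: "carrier (presented_group S R) = word_class ` words S"
  by (auto simp: presented_group_def word_class_def)

lemma one_presented_group: "\<one>\<^bsub>presented_group S R\<^esub> = word_class []"
  by (simp add: presented_group_def word_class_def)

lemma mult_word_class:
  assumes u: "u \<in> words S" and v: "v \<in> words S"
  shows "word_class u \<otimes>\<^bsub>presented_group S R\<^esub> word_class v = word_class (u @ v)"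
proof -
  have "pres_eq S R `` {a @ b} = word_class (u @ v)" if "a \<in> word_class u" "b \<in> word_class v" for a b
  proof -
    have "(a @ b, u @ v) \<in> pres_eq S R"
      using that by (meson pres_eq_append pres_eq.sym mem_word_class_iff)
    then show ?thesis using word_class_eqI unfolding word_class_def by blast
  qed
  then have "(\<Union>a\<in>word_class u. \<Union>b\<in>word_class v. pres_eq S R `` {a @ b}) = word_class (u @ v)"
    using mem_word_class[OF u] mem_word_class[OF v] by blast
  then show ?thesis by (simp add: presented_group_def word_class_def)
qed

lemma group_presented_group: "group (presented_group S R)"
proof (rule groupI)
  fix x
  assume "x \<in> carrier (presented_group S R)"
  then obtain w where w: "w \<in> words S" "x = word_class w"
    by (auto simp: carrier_presented_group)
  then have "word_class (word_inv w) \<otimes>\<^bsub>presented_group S R\<^esub> x = \<one>\<^bsub>presented_group S R\<^esub>"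
    using pres_eq_word_inv_cancel by (simp add: mult_word_class one_presented_group word_class_eqI)
  then show "\<exists>y\<in>carrier (presented_group S R). y \<otimes>\<^bsub>presented_group S R\<^esub> x = \<one>\<^bsub>presented_group S R\<^esub>"
    using w by (auto simp: carrier_presented_group)
next
  fix x y z
  assume "x \<in> carrier (presented_group S R)" "y \<in> carrier (presented_group S R)"
    "z \<in> carrier (presented_group S R)"
  then show "x \<otimes>\<^bsub>presented_group S R\<^esub> y \<otimes>\<^bsub>presented_group S R\<^esub> z =
      x \<otimes>\<^bsub>presented_group S R\<^esub> (y \<otimes>\<^bsub>presented_group S R\<^esub> z)"
    by (auto simp: carrier_presented_group mult_word_class)
qed (auto simp: carrier_presented_group mult_word_class one_presented_group)

definition generator :: "'a \<Rightarrow> 'a word set" where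
  "generator s = word_class [(s, True)]"

lemma generator_closed: "generator ` S \<subseteq> carrier (presented_group S R)"
  by (auto simp: generator_def carrier_presented_group)

lemma word_class_eq_eval_word:
  assumes "w \<in> words S"
  shows "word_class w = eval_word (presented_group S R) generator w"
  using assms
proof (induction w)
  case Nil
  then show ?case by (simp add: one_presented_group)
next
  case (Cons a w)
  obtain x b where a: "a = (x, b)" by (cases a)
  with Cons.prems have x: "x \<in> S" and w: "w \<in> words S" by auto
  have "word_class [(x, False)] \<otimes>\<^bsub>presented_group S R\<^esub> word_class [(x, True)] = \<one>\<^bsub>presented_group S R\<^esub>"
    using pres_eq_word_inv_cancel[of "[(x, True)]"] x
    by (simp add: mult_word_class one_presented_group word_class_eqI)
  then have "word_class [(x, False)] = inv\<^bsub>presented_group S R\<^esub> generator x"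
    using group.inv_equality[OF group_presented_group] x
    by (simp add: generator_def carrier_presented_group)
  then have "word_class [(x, b)] = (if b then generator x else inv\<^bsub>presented_group S R\<^esub> generator x)"
    by (cases b) (auto simp: generator_def)
  then show ?case
    using Cons.IH[OF w] mult_word_class[of "[(x, b)]" w] x w by (simp add: a)
qed

lemma carrier_presented_group_eval:
  "carrier (presented_group S R) = eval_word (presented_group S R) generator ` words S"
  using word_class_eq_eval_word by (auto simp: carrier_presented_group)

definition induced_fun :: "('a word \<Rightarrow> 'c) \<Rightarrow> 'a word set \<Rightarrow> 'c" where
  "induced_fun f Y = f (SOME w. w \<in> Y)"

lemma induced_fun_word_class:
  assumes f: "\<And>u v. (u, v) \<in> pres_eq S R \<Longrightarrow> f u = f v" and w: "w \<in> words S"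
  shows "induced_fun f (word_class w) = f w"
proof -
  have "(SOME u. u \<in> word_class w) \<in> word_class w"
    using mem_word_class[OF w] by (rule someI)
  then show ?thesis using f by (simp add: induced_fun_def mem_word_class_iff)
qed

lemma image_induced_fun:
  assumes "\<And>u v. (u, v) \<in> pres_eq S R \<Longrightarrow> f u = f v"
  shows "f ` words S = induced_fun f ` carrier (presented_group S R)"
proof -
  have "f ` words S = (\<lambda>w. induced_fun f (word_class w)) ` words S"
    using induced_fun_word_class[OF assms] by simp
  then show ?thesis by (simp add: carrier_presented_group image_image)
qed

lemma induced_fun_hom:
  assumes f: "\<And>u v. (u, v) \<in> pres_eq S R \<Longrightarrow> f u = f v"
    and f_closed: "\<And>w. w \<in> words S \<Longrightarrow> f w \<in> carrier H"
    and f_append: "\<And>u v. u \<in> words S \<Longrightarrow> v \<in> words S \<Longrightarrow> f (u @ v) = f u \<otimes>\<^bsub>H\<^esub> f v"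
  shows "induced_fun f \<in> hom (presented_group S R) H"
proof (rule homI)
  fix x y
  assume "x \<in> carrier (presented_group S R)" "y \<in> carrier (presented_group S R)"
  then obtain u v where "u \<in> words S" "v \<in> words S" "x = word_class u" "y = word_class v"
    by (auto simp: carrier_presented_group)
  then show "induced_fun f (x \<otimes>\<^bsub>presented_group S R\<^esub> y) = induced_fun f x \<otimes>\<^bsub>H\<^esub> induced_fun f y"
    by (simp add: mult_word_class induced_fun_word_class[OF f] f_append)
qed (auto simp: carrier_presented_group induced_fun_word_class[OF f] f_closed)

end

section \<open>The geometric representation of a Coxeter group\<close>

fun alt_comp :: "('b \<Rightarrow> 'b) \<Rightarrow> ('b \<Rightarrow> 'b) \<Rightarrow> nat \<Rightarrow> 'b \<Rightarrow> 'b" where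
  "alt_comp f g 0 = id"
| "alt_comp f g (Suc n) = f \<circ> alt_comp g f n"

text \<open>The reflections in \<open>s\<close> and \<open>t\<close> act on \<open>(pairing s x, pairing t x)\<close> by the following
  maps, with \<open>c = - coxeter_form s t\<close> (see \<open>reflection_pairings\<close> below).\<close>

definition plane_refl1 :: "real \<Rightarrow> real \<times> real \<Rightarrow> real \<times> real" where
  "plane_refl1 c = (\<lambda>(p, q). (- p, q + 2 * c * p))"

definition plane_refl2 :: "real \<Rightarrow> real \<times> real \<Rightarrow> real \<times> real" where
  "plane_refl2 c = (\<lambda>(p, q). (p + 2 * c * q, - q))"

lemma alt_comp_plane_refl_swap:
  "alt_comp (plane_refl2 c) (plane_refl1 c) n z
     = prod.swap (alt_comp (plane_refl1 c) (plane_refl2 c) n (prod.swap z))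
   \<and> alt_comp (plane_refl1 c) (plane_refl2 c) n z
     = prod.swap (alt_comp (plane_refl2 c) (plane_refl1 c) n (prod.swap z))"
proof (induction n arbitrary: z)
  case (Suc n)
  have P2_swap: "plane_refl2 c (prod.swap z') = prod.swap (plane_refl1 c z')"
    and P1_swap: "plane_refl1 c (prod.swap z') = prod.swap (plane_refl2 c z')" for z'
    by (auto simp: plane_refl1_def plane_refl2_def split: prod.splits)
  have "alt_comp (plane_refl2 c) (plane_refl1 c) (Suc n) z
      = plane_refl2 c (prod.swap (alt_comp (plane_refl2 c) (plane_refl1 c) n (prod.swap z)))"
    using Suc.IH[of z] by simp
  also have "\<dots> = prod.swap (alt_comp (plane_refl1 c) (plane_refl2 c) (Suc n) (prod.swap z))"
    by (simp only: P2_swap alt_comp.simps comp_apply)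
  finally have 1: "alt_comp (plane_refl2 c) (plane_refl1 c) (Suc n) z
      = prod.swap (alt_comp (plane_refl1 c) (plane_refl2 c) (Suc n) (prod.swap z))" .
  have "alt_comp (plane_refl1 c) (plane_refl2 c) (Suc n) z
      = plane_refl1 c (prod.swap (alt_comp (plane_refl1 c) (plane_refl2 c) n (prod.swap z)))"
    using Suc.IH[of z] by simp
  also have "\<dots> = prod.swap (alt_comp (plane_refl2 c) (plane_refl1 c) (Suc n) (prod.swap z))"
    by (simp only: P1_swap alt_comp.simps comp_apply)
  finally show ?case using 1 by blast
qed simp

text \<open>\<open>sin_ratio \<theta> (n + 1) = U\<^sub>n(cos \<theta>)\<close>, with \<open>U\<^sub>n\<close> the Chebyshev polynomials of the second kind.\<close>

definition sin_ratio :: "real \<Rightarrow> real \<Rightarrow> real" where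
  "sin_ratio \<theta> x = sin (x * \<theta>) / sin \<theta>"

lemma sin_ratio_rec:
  assumes "sin \<theta> \<noteq> 0"
  shows "sin_ratio \<theta> (x + 1) = 2 * cos \<theta> * sin_ratio \<theta> x - sin_ratio \<theta> (x - 1)"
proof -
  have "sin ((x + 1) * \<theta>) + sin ((x - 1) * \<theta>) = 2 * cos \<theta> * sin (x * \<theta>)"
    by (simp add: distrib_right left_diff_distrib sin_add sin_diff)
  then show ?thesis using assms by (simp add: sin_ratio_def field_simps)
qed

lemma alt_comp_plane_refl:
  assumes "sin \<theta> \<noteq> 0"
  shows "alt_comp (plane_refl1 (cos \<theta>)) (plane_refl2 (cos \<theta>)) n (p, q) =
    (if even n
     then (- sin_ratio \<theta> (real n - 1) * p - sin_ratio \<theta> n * q,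
           sin_ratio \<theta> n * p + sin_ratio \<theta> (real n + 1) * q)
     else (- sin_ratio \<theta> n * p - sin_ratio \<theta> (real n - 1) * q,
           sin_ratio \<theta> (real n + 1) * p + sin_ratio \<theta> n * q))"
proof (induction n arbitrary: p q)
  case 0
  have "sin_ratio \<theta> 1 = 1" "sin_ratio \<theta> (- 1) = - 1" "sin_ratio \<theta> 0 = 0"
    using assms by (auto simp: sin_ratio_def)
  then show ?case by simp
next
  case (Suc n)
  let ?c = "cos \<theta>" and ?U = "sin_ratio \<theta>"
  have r1: "?U (real n + 1) = 2 * ?c * ?U n - ?U (real n - 1)"
    using sin_ratio_rec[OF assms] by simp
  have r2: "?U (real n + 2) = 2 * ?c * ?U (real n + 1) - ?U n"
    using sin_ratio_rec[OF assms, of "real n + 1"] by (simp add: add.commute)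
  have step: "alt_comp (plane_refl1 ?c) (plane_refl2 ?c) (Suc n) (p, q)
      = plane_refl1 ?c (prod.swap (alt_comp (plane_refl1 ?c) (plane_refl2 ?c) n (q, p)))"
    using conjunct1[OF alt_comp_plane_refl_swap[of ?c n "(p, q)"]] by simp
  have rs: "real (Suc n) = real n + 1" "real (Suc n) - 1 = real n" "real (Suc n) + 1 = real n + 2"
    "?U (2 + real n) = ?U (real n + 2)"
    by (auto simp: add.commute)
  have g1: "plane_refl1 c (prod.swap (- a * q - b * p, b * q + d * p)) = (- d * p - b * q, e * p + d * q)"
    if "d = 2 * c * b - a" "e = 2 * c * d - b" for a b c d e :: real
    using that by (simp add: plane_refl1_def) (simp add: algebra_simps)
  have g2: "plane_refl1 c (prod.swap (- b * q - a * p, d * q + b * p)) = (- b * p - d * q, d * p + e * q)"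
    if "d = 2 * c * b - a" "e = 2 * c * d - b" for a b c d e :: real
    using that by (simp add: plane_refl1_def) (simp add: algebra_simps)
  show ?case
    unfolding step Suc.IH rs(1-3) using g1[OF r1 r2] g2[OF r1 r2] by (simp add: rs(4))
qed

lemma plane_refl_braid:
  assumes m: "m \<ge> (2::nat)"
  shows "alt_comp (plane_refl1 (cos (pi / m))) (plane_refl2 (cos (pi / m))) m
       = alt_comp (plane_refl2 (cos (pi / m))) (plane_refl1 (cos (pi / m))) m"
proof -
  let ?\<theta> = "pi / m"
  have "0 < ?\<theta>" "?\<theta> < pi" using m by (simp_all add: divide_less_eq)
  then have s: "sin ?\<theta> \<noteq> 0" using sin_gt_zero by force
  have "(real m - 1) * ?\<theta> = pi - ?\<theta>" "(real m + 1) * ?\<theta> = pi + ?\<theta>"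
    using m by (simp_all add: field_simps)
  then have "sin_ratio ?\<theta> (real m - 1) = 1" "sin_ratio ?\<theta> (real m + 1) = - 1"
    using s by (simp_all only: sin_ratio_def sin_pi_minus sin_periodic_pi2) simp_all
  moreover have "sin_ratio ?\<theta> m = 0" using m by (simp add: sin_ratio_def)
  ultimately have A: "alt_comp (plane_refl1 (cos ?\<theta>)) (plane_refl2 (cos ?\<theta>)) m (p, q)
      = (if even m then (- p, - q) else (- q, - p))" for p q
    using alt_comp_plane_refl[OF s, of m p q] by simp
  show ?thesis
  proof
    fix z :: "real \<times> real"
    obtain p q where z: "z = (p, q)" by (cases z)
    show "alt_comp (plane_refl1 (cos ?\<theta>)) (plane_refl2 (cos ?\<theta>)) m z
        = alt_comp (plane_refl2 (cos ?\<theta>)) (plane_refl1 (cos ?\<theta>)) m z"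
      using A[of p q] A[of q p] conjunct1[OF alt_comp_plane_refl_swap[of "cos ?\<theta>" m z]] z by simp
  qed
qed

locale coxeter_system =
  fixes S :: "'a set" and M :: "'a \<Rightarrow> 'a \<Rightarrow> nat"
  assumes finite_S: "finite S" and coxeter_matrix: "coxeter_matrix S M"
begin

lemma M_self: "s \<in> S \<Longrightarrow> M s s = 1"
  using coxeter_matrix by (simp add: coxeter_matrix_def)

lemma M_sym: "s \<in> S \<Longrightarrow> t \<in> S \<Longrightarrow> M s t = M t s"
  using coxeter_matrix by (simp add: coxeter_matrix_def)

lemma M_ge_2: "s \<in> S \<Longrightarrow> t \<in> S \<Longrightarrow> s \<noteq> t \<Longrightarrow> M s t \<noteq> 0 \<Longrightarrow> M s t \<ge> 2"
  using coxeter_matrix unfolding coxeter_matrix_def by (metis (no_types))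

definition coxeter_form :: "'a \<Rightarrow> 'a \<Rightarrow> real" where
  "coxeter_form s t = (if M s t = 0 then -1 else - cos (pi / M s t))"

definition unit_vec :: "'a \<Rightarrow> 'a \<Rightarrow> real" where
  "unit_vec t = (\<lambda>u. if u = t then 1 else 0)"

definition pairing :: "'a \<Rightarrow> ('a \<Rightarrow> real) \<Rightarrow> real" where
  "pairing t x = (\<Sum>u\<in>S. coxeter_form t u * x u)"

definition reflection :: "'a \<Rightarrow> ('a \<Rightarrow> real) \<Rightarrow> 'a \<Rightarrow> real" where
  "reflection t x = (\<lambda>u. x u - 2 * pairing t x * unit_vec t u)"

text \<open>A letter \<open>(s, False)\<close> acts like \<open>(s, True)\<close>, as \<open>s\<^sup>2 = 1\<close> in the Coxeter group.\<close>

definition geom_rep :: "'a word \<Rightarrow> ('a \<Rightarrow> real) \<Rightarrow> 'a \<Rightarrow> real" where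
  "geom_rep w = foldr (\<lambda>l f. reflection (fst l) \<circ> f) w id"

lemma geom_rep_Nil [simp]: "geom_rep [] = id"
  by (simp add: geom_rep_def)

lemma geom_rep_Cons [simp]: "geom_rep (l # w) = reflection (fst l) \<circ> geom_rep w"
  by (simp add: geom_rep_def)

lemma geom_rep_append: "geom_rep (u @ v) = geom_rep u \<circ> geom_rep v"
  by (induction u) auto

lemma geom_rep_alt: "geom_rep (alt s t n) = alt_comp (reflection s) (reflection t) n"
  by (induction n arbitrary: s t) auto

lemma coxeter_form_self: "s \<in> S \<Longrightarrow> coxeter_form s s = 1"
  by (simp add: coxeter_form_def M_self)

lemma coxeter_form_sym: "s \<in> S \<Longrightarrow> t \<in> S \<Longrightarrow> coxeter_form s t = coxeter_form t s"
  by (simp add: coxeter_form_def M_sym)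

lemma pairing_lin: "pairing t (\<lambda>u. a * x u + b * y u) = a * pairing t x + b * pairing t y"
  by (simp add: pairing_def sum.distrib sum_distrib_left algebra_simps)

lemma pairing_unit_vec: "s \<in> S \<Longrightarrow> pairing t (unit_vec s) = coxeter_form t s"
  using finite_S by (simp add: pairing_def unit_vec_def if_distrib[of "\<lambda>z. _ * z"] cong: if_cong)

lemma pairing_add_unit_vec:
  "s \<in> S \<Longrightarrow> pairing r (\<lambda>u. y u + k * unit_vec s u) = pairing r y + k * coxeter_form r s"
  using pairing_lin[of r 1 y k "unit_vec s"] pairing_unit_vec by simp

lemma pairing_reflection:
  "t \<in> S \<Longrightarrow> pairing r (reflection t y) = pairing r y - 2 * pairing t y * coxeter_form r t"
  using pairing_add_unit_vec[of t r y "- 2 * pairing t y"] by (simp add: reflection_def)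

lemma reflection_reflection [simp]: "t \<in> S \<Longrightarrow> reflection t (reflection t x) = x"
  using pairing_reflection[of t t x] coxeter_form_self[of t]
  by (simp add: reflection_def[of t "reflection t x"]) (simp add: reflection_def algebra_simps)

lemma reflection_pairings:
  assumes s: "s \<in> S" and t: "t \<in> S"
  shows "(pairing s (reflection s y), pairing t (reflection s y))
           = plane_refl1 (- coxeter_form s t) (pairing s y, pairing t y)"
    and "(pairing s (reflection t y), pairing t (reflection t y))
           = plane_refl2 (- coxeter_form s t) (pairing s y, pairing t y)"
  using pairing_reflection[OF s] pairing_reflection[OF t] coxeter_form_self[OF s]
    coxeter_form_self[OF t] coxeter_form_sym[OF s t]
  by (simp_all add: plane_refl1_def plane_refl2_def)

lemma alt_comp_reflection_pairings:
  assumes s: "s \<in> S" and t: "t \<in> S"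
  shows "(pairing s (alt_comp (reflection s) (reflection t) n x),
          pairing t (alt_comp (reflection s) (reflection t) n x))
         = alt_comp (plane_refl1 (- coxeter_form s t)) (plane_refl2 (- coxeter_form s t)) n
             (pairing s x, pairing t x)
       \<and> (pairing s (alt_comp (reflection t) (reflection s) n x),
          pairing t (alt_comp (reflection t) (reflection s) n x))
         = alt_comp (plane_refl2 (- coxeter_form s t)) (plane_refl1 (- coxeter_form s t)) n
             (pairing s x, pairing t x)"
proof (induction n)
  case (Suc n)
  then show ?case using reflection_pairings[OF s t] by simp
qed simp

lemma alt_comp_reflection_span:
  assumes "{s', t'} = {s, t}"
  shows "\<exists>a b. alt_comp (reflection s') (reflection t') n x = (\<lambda>u. x u + a * unit_vec s u + b * unit_vec t u)"
  using assms
proof (induction n arbitrary: s' t')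
  case 0
  show ?case by (rule exI[of _ 0], rule exI[of _ 0]) simp
next
  case (Suc n)
  have "{t', s'} = {s, t}" using Suc.prems by (simp add: insert_commute)
  then obtain a b where ab: "alt_comp (reflection t') (reflection s') n x
      = (\<lambda>u. x u + a * unit_vec s u + b * unit_vec t u)"
    using Suc.IH by blast
  define p where "p = pairing s' (alt_comp (reflection t') (reflection s') n x)"
  have step: "alt_comp (reflection s') (reflection t') (Suc n) x
      = (\<lambda>u. x u + a * unit_vec s u + b * unit_vec t u - 2 * p * unit_vec s' u)"
    by (simp add: reflection_def p_def ab)
  have "s' = s \<or> s' = t" using Suc.prems by auto
  then show ?case
  proof
    assume "s' = s"
    then show ?thesis
      unfolding step by (intro exI[of _ "a - 2 * p"] exI[of _ b]) (simp add: fun_eq_iff algebra_simps)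
  next
    assume "s' = t"
    then show ?thesis
      unfolding step by (intro exI[of _ a] exI[of _ "b - 2 * p"]) (simp add: fun_eq_iff algebra_simps)
  qed
qed

lemma geom_rep_braid:
  assumes s: "s \<in> S" and t: "t \<in> S" and st: "s \<noteq> t" and m0: "M s t \<noteq> 0"
  shows "geom_rep (alt s t (M s t)) = geom_rep (alt t s (M s t))"
proof
  fix x
  let ?m = "M s t" and ?c = "cos (pi / M s t)"
  have m: "?m \<ge> 2" using M_ge_2[OF s t st m0] .
  have c: "- coxeter_form s t = ?c" using m0 by (simp add: coxeter_form_def)
  have cst: "coxeter_form s t = - ?c" "coxeter_form t s = - ?c"
    using c coxeter_form_sym[OF s t] by simp_all
  have pos: "0 < pi / ?m" using m by simp
  have le: "pi / ?m \<le> pi / 2" using m by (intro divide_left_mono) auto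
  have "0 \<le> ?c" using pos le by (intro cos_ge_zero) auto
  moreover have "?c < 1" using cos_monotone_0_pi[of 0 "pi / ?m"] pos le by simp
  ultimately have "?c * ?c < 1" using mult_strict_mono[of ?c 1 ?c 1] by simp
  then have c_sq: "?c * ?c \<noteq> 1" by simp
  obtain a1 b1 where 1: "geom_rep (alt s t ?m) x = (\<lambda>u. x u + a1 * unit_vec s u + b1 * unit_vec t u)"
    using alt_comp_reflection_span[of s t s t ?m x] by (auto simp: geom_rep_alt)
  obtain a2 b2 where 2: "geom_rep (alt t s ?m) x = (\<lambda>u. x u + a2 * unit_vec s u + b2 * unit_vec t u)"
    using alt_comp_reflection_span[of t s s t ?m x] by (auto simp: geom_rep_alt insert_commute)
  have pair: "pairing r (\<lambda>u. x u + a * unit_vec s u + b * unit_vec t u)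
      = pairing r x + a * coxeter_form r s + b * coxeter_form r t" for r a b
    using pairing_add_unit_vec[OF t, of r "\<lambda>u. x u + a * unit_vec s u" b] pairing_add_unit_vec[OF s] by simp
  have "(pairing s (geom_rep (alt s t ?m) x), pairing t (geom_rep (alt s t ?m) x))
      = (pairing s (geom_rep (alt t s ?m) x), pairing t (geom_rep (alt t s ?m) x))"
    using alt_comp_reflection_pairings[OF s t, of ?m x] plane_refl_braid[OF m] by (simp add: geom_rep_alt c)
  then have "a1 - ?c * b1 = a2 - ?c * b2" "- ?c * a1 + b1 = - ?c * a2 + b2"
    unfolding 1 2 pair by (simp_all add: coxeter_form_self[OF s] coxeter_form_self[OF t] cst mult.commute)
  then have d1: "a1 - a2 = ?c * (b1 - b2)" and d2: "b1 - b2 = ?c * (a1 - a2)"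
    by (simp_all add: algebra_simps)
  then have "(1 - ?c * ?c) * (a1 - a2) = 0" by (simp add: algebra_simps)
  then have "a1 = a2" "b1 = b2" using c_sq d2 by auto
  then show "geom_rep (alt s t ?m) x = geom_rep (alt t s ?m) x" using 1 2 by simp
qed

abbreviation coxeter_relations :: "('a word \<times> 'a word) set" where
  "coxeter_relations \<equiv> braid_rels S M \<union> {([(s, True), (s, True)], []) | s. s \<in> S}"

sublocale W: presentation S coxeter_relations
  by unfold_locales (auto simp: braid_rels_def alt_words)

lemma geom_rep_relation: "(l, r) \<in> coxeter_relations \<Longrightarrow> geom_rep l = geom_rep r"
  by (auto simp: braid_rels_def comp_def id_def intro!: geom_rep_braid)

lemma geom_rep_pres_eq: "(u, v) \<in> pres_eq S coxeter_relations \<Longrightarrow> geom_rep u = geom_rep v"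
proof (induction rule: pres_eq.induct)
  case (cancel u v x b)
  then show ?case by (simp add: geom_rep_append fun_eq_iff)
next
  case (rel l r u v)
  then show ?case using geom_rep_relation[of l r] by (simp add: geom_rep_append)
qed auto

definition geom_image :: "(('a \<Rightarrow> real) \<Rightarrow> 'a \<Rightarrow> real) set" where
  "geom_image = geom_rep ` words S"

lemma finite_geom_image:
  assumes "finite (carrier (coxeter_group S M))"
  shows "finite geom_image"
  using W.image_induced_fun[OF geom_rep_pres_eq] assms
  by (simp add: geom_image_def coxeter_group_def)

lemma id_in_geom_image: "id \<in> geom_image"
  unfolding geom_image_def using geom_rep_Nil words_Nil by (metis image_eqI)

definition is_linear :: "(('a \<Rightarrow> real) \<Rightarrow> 'a \<Rightarrow> real) \<Rightarrow> bool" where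
  "is_linear g \<longleftrightarrow> (\<forall>x y a b. g (\<lambda>u. a * x u + b * y u) = (\<lambda>u. a * g x u + b * g y u))"

lemma is_linear_geom_rep: "is_linear (geom_rep w)"
proof (induction w)
  case Nil
  then show ?case by (simp add: is_linear_def)
next
  case (Cons l w)
  have "is_linear (reflection (fst l))"
    by (auto simp: is_linear_def reflection_def pairing_lin fun_eq_iff algebra_simps)
  with Cons show ?case by (simp add: is_linear_def)
qed

lemma is_linear_sum:
  assumes g: "is_linear g" and A: "finite A"
  shows "g (\<lambda>u. \<Sum>t\<in>A. c t * f t u) = (\<lambda>u. \<Sum>t\<in>A. c t * g (f t) u)"
  using A
proof (induction A rule: finite_induct)
  case empty
  have "g (\<lambda>u. 0 * x u + 0 * x u) = (\<lambda>u. 0 * g x u + 0 * g x u)" for x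
    using g by (simp only: is_linear_def)
  then show ?case by simp
next
  case (insert t A)
  have "g (\<lambda>u. \<Sum>t\<in>insert t A. c t * f t u) = g (\<lambda>u. c t * f t u + 1 * (\<Sum>t\<in>A. c t * f t u))"
    using insert by simp
  also have "\<dots> = (\<lambda>u. c t * g (f t) u + 1 * g (\<lambda>u. \<Sum>t\<in>A. c t * f t u) u)"
    using g by (simp only: is_linear_def)
  finally show ?case using insert by simp
qed

lemma geom_image_comp_reflection:
  assumes t: "t \<in> S"
  shows "bij_betw (\<lambda>g. g \<circ> reflection t) geom_image geom_image"
proof -
  have "geom_rep w \<circ> reflection t \<in> geom_image" if "w \<in> words S" for w
  proof -
    have "geom_rep w \<circ> reflection t = geom_rep (w @ [(t, True)])" by (simp add: geom_rep_append)
    then show ?thesis using that t by (simp add: geom_image_def)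
  qed
  then have "(\<lambda>g. g \<circ> reflection t) ` geom_image \<subseteq> geom_image"
    by (auto simp: geom_image_def)
  moreover have "\<forall>g\<in>geom_image. g \<circ> reflection t \<circ> reflection t = g"
    using t by (simp add: fun_eq_iff)
  ultimately show ?thesis by (intro bij_betw_byWitness) auto
qed

definition avg_inner :: "('a \<Rightarrow> real) \<Rightarrow> ('a \<Rightarrow> real) \<Rightarrow> real" where
  "avg_inner x y = (\<Sum>g\<in>geom_image. \<Sum>u\<in>S. g x u * g y u)"

lemma avg_inner_sym: "avg_inner x y = avg_inner y x"
  by (simp add: avg_inner_def mult.commute)

lemma avg_inner_lin_right: "avg_inner x (\<lambda>u. a * y u + b * z u) = a * avg_inner x y + b * avg_inner x z"
proof -
  have "g (\<lambda>u. a * y u + b * z u) = (\<lambda>u. a * g y u + b * g z u)" if "g \<in> geom_image" for g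
    using that is_linear_geom_rep unfolding geom_image_def is_linear_def by blast
  then show ?thesis
    by (simp add: avg_inner_def algebra_simps sum.distrib sum_distrib_left)
qed

lemma avg_inner_lin_left: "avg_inner (\<lambda>u. a * y u + b * z u) x = a * avg_inner y x + b * avg_inner z x"
  using avg_inner_lin_right avg_inner_sym by metis

lemma avg_inner_reflection: "t \<in> S \<Longrightarrow> avg_inner (reflection t x) (reflection t y) = avg_inner x y"
  unfolding avg_inner_def
  using sum.reindex_bij_betw[OF geom_image_comp_reflection, of t "\<lambda>g. \<Sum>u\<in>S. g x u * g y u"]
  by simp

text \<open>Since \<open>reflection t\<close> is orthogonal for \<open>avg_inner\<close>, it is the orthogonal reflection in
  \<open>unit_vec t\<close>, which makes \<open>avg_inner (unit_vec t)\<close> proportional to \<open>pairing t\<close>.\<close>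

lemma avg_inner_unit_vec:
  assumes t: "t \<in> S"
  shows "avg_inner (unit_vec t) x = pairing t x * avg_inner (unit_vec t) (unit_vec t)"
proof -
  define h where "h = (\<lambda>u. 1 * x u + (- pairing t x) * unit_vec t u)"
  have "pairing t h = 0"
    using pairing_lin[of t 1 x "- pairing t x" "unit_vec t"] pairing_unit_vec[OF t] coxeter_form_self[OF t]
    by (simp add: h_def)
  then have rh: "reflection t h = h" by (simp add: reflection_def)
  have re: "reflection t (unit_vec t) = (\<lambda>u. (- 1) * unit_vec t u + 0 * unit_vec t u)"
    using pairing_unit_vec[OF t, of t] coxeter_form_self[OF t] by (simp add: reflection_def)
  have "avg_inner (unit_vec t) h = avg_inner (reflection t (unit_vec t)) (reflection t h)"
    using avg_inner_reflection[OF t] by simp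
  also have "\<dots> = - avg_inner (unit_vec t) h"
    unfolding re rh avg_inner_lin_left by simp
  finally have "avg_inner (unit_vec t) h = 0" by simp
  moreover have "x = (\<lambda>u. 1 * h u + pairing t x * unit_vec t u)" by (simp add: h_def)
  then have "avg_inner (unit_vec t) x = 1 * avg_inner (unit_vec t) h + pairing t x * avg_inner (unit_vec t) (unit_vec t)"
    by (metis avg_inner_lin_right)
  ultimately show ?thesis by simp
qed

lemma avg_inner_self_ge:
  assumes "finite geom_image"
  shows "(\<Sum>u\<in>S. x u * x u) \<le> avg_inner x x"
  unfolding avg_inner_def
  using member_le_sum[OF id_in_geom_image, of "\<lambda>g. \<Sum>u\<in>S. g x u * g x u"] assms
  by (simp add: sum_nonneg)

lemma avg_inner_expand:
  assumes v: "\<And>u. u \<notin> S \<Longrightarrow> v u = 0"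
  shows "avg_inner v v = (\<Sum>t\<in>S. v t * avg_inner (unit_vec t) v)"
proof -
  have v_sum: "(\<lambda>u. \<Sum>t\<in>S. v t * unit_vec t u) = v"
    using v finite_S by (auto simp: fun_eq_iff unit_vec_def if_distrib[of "\<lambda>z. _ * z"] cong: if_cong)
  have gv: "g v = (\<lambda>u. \<Sum>t\<in>S. v t * g (unit_vec t) u)" if "g \<in> geom_image" for g
  proof -
    have "is_linear g" using that is_linear_geom_rep by (auto simp: geom_image_def)
    from is_linear_sum[OF this finite_S, of v unit_vec] show ?thesis by (simp only: v_sum)
  qed
  have "avg_inner v v = (\<Sum>g\<in>geom_image. \<Sum>u\<in>S. (\<Sum>t\<in>S. v t * g (unit_vec t) u) * g v u)"
    unfolding avg_inner_def by (rule sum.cong[OF HOL.refl]) (metis gv)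
  also have "\<dots> = (\<Sum>g\<in>geom_image. \<Sum>u\<in>S. \<Sum>t\<in>S. v t * (g (unit_vec t) u * g v u))"
    by (simp add: sum_distrib_right mult.assoc)
  also have "\<dots> = (\<Sum>g\<in>geom_image. \<Sum>t\<in>S. \<Sum>u\<in>S. v t * (g (unit_vec t) u * g v u))"
    by (rule sum.cong[OF HOL.refl]) (rule sum.swap)
  also have "\<dots> = (\<Sum>t\<in>S. \<Sum>g\<in>geom_image. \<Sum>u\<in>S. v t * (g (unit_vec t) u * g v u))"
    by (rule sum.swap)
  also have "\<dots> = (\<Sum>t\<in>S. v t * avg_inner (unit_vec t) v)"
    by (simp add: avg_inner_def sum_distrib_left)
  finally show ?thesis .
qed

text \<open>The weak form of positive definiteness of the Coxeter form that is needed below: were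
  \<open>pairing t v \<le> 0\<close> on the support of \<open>v \<ge> 0\<close>, \<open>v \<noteq> 0\<close>, then
  \<open>avg_inner v v \<le> 0\<close>, as \<open>avg_inner (unit_vec t)\<close> is a nonnegative multiple of \<open>pairing t\<close>.\<close>

lemma nonneg_vector_pairing_pos:
  assumes fin: "finite (carrier (coxeter_group S M))"
    and v_out: "\<And>u. u \<notin> S \<Longrightarrow> v u = 0"
    and v_nonneg: "\<And>u. u \<in> S \<Longrightarrow> 0 \<le> v u"
    and v_pos: "u\<^sub>0 \<in> S" "0 < v u\<^sub>0"
  shows "\<exists>t\<in>S. 0 < v t \<and> 0 < pairing t v"
proof (rule ccontr)
  assume contra: "\<not> ?thesis"
  have neg: "v t * (pairing t v * avg_inner (unit_vec t) (unit_vec t)) \<le> 0" if t: "t \<in> S" for t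
  proof (cases "v t = 0")
    case False
    then have "0 < v t" using v_nonneg[OF t] by simp
    with contra t have "pairing t v \<le> 0" by auto
    moreover have "0 \<le> avg_inner (unit_vec t) (unit_vec t)" by (simp add: avg_inner_def sum_nonneg)
    ultimately show ?thesis using \<open>0 < v t\<close> by (intro mult_nonneg_nonpos mult_nonpos_nonneg) auto
  qed simp
  have "avg_inner v v = (\<Sum>t\<in>S. v t * avg_inner (unit_vec t) v)"
    by (rule avg_inner_expand[OF v_out])
  also have "\<dots> = (\<Sum>t\<in>S. v t * (pairing t v * avg_inner (unit_vec t) (unit_vec t)))"
    by (rule sum.cong[OF HOL.refl]) (simp only: avg_inner_unit_vec[where x = v])
  also have "\<dots> \<le> 0" using neg by (rule sum_nonpos)
  finally have "avg_inner v v \<le> 0" .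
  moreover have "v u\<^sub>0 * v u\<^sub>0 \<le> (\<Sum>u\<in>S. v u * v u)"
    using v_pos(1) finite_S by (intro member_le_sum) auto
  moreover have "0 < v u\<^sub>0 * v u\<^sub>0" using v_pos(2) by simp
  ultimately show False
    using avg_inner_self_ge[OF finite_geom_image[OF fin], of v] by linarith
qed

section \<open>The odd classes of a finite irreducible Coxeter system\<close>

definition odd_rel :: "('a \<times> 'a) set" where
  "odd_rel = {(x, y). x \<in> S \<and> y \<in> S \<and> x \<noteq> y \<and> odd (M x y)}"

lemma odd_rel_sym: "(x, y) \<in> odd_rel \<Longrightarrow> (y, x) \<in> odd_rel"
  unfolding odd_rel_def using M_sym by auto

lemma odd_rel_rtrancl_sym: "(x, y) \<in> odd_rel\<^sup>* \<Longrightarrow> (y, x) \<in> odd_rel\<^sup>*"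
  by (induction rule: rtrancl_induct) (auto intro: converse_rtrancl_into_rtrancl odd_rel_sym)

lemma even_if_not_odd_rel: "x \<in> S \<Longrightarrow> y \<in> S \<Longrightarrow> (x, y) \<notin> odd_rel\<^sup>* \<Longrightarrow> even (M x y)"
  by (cases "x = y") (auto simp: odd_rel_def)

lemma coxeter_form_nonpos: "s \<in> S \<Longrightarrow> t \<in> S \<Longrightarrow> s \<noteq> t \<Longrightarrow> coxeter_form s t \<le> 0"
proof -
  assume st: "s \<in> S" "t \<in> S" "s \<noteq> t"
  show ?thesis
  proof (cases "M s t = 0")
    case False
    then have m: "M s t \<ge> 2" using M_ge_2 st by blast
    have "0 < pi / M s t" using m by simp
    moreover have "pi / M s t \<le> pi / 2" using m by (intro divide_left_mono) auto
    ultimately have "0 \<le> cos (pi / M s t)" by (intro cos_ge_zero) auto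
    then show ?thesis using False by (simp add: coxeter_form_def)
  qed (simp add: coxeter_form_def)
qed

lemma coxeter_form_le_cos:
  assumes "M s t \<noteq> 0" "M s t \<ge> k" "k > 0"
  shows "coxeter_form s t \<le> - cos (pi / k)"
proof -
  have "pi / M s t \<le> pi / k" using assms by (intro divide_left_mono) auto
  then have "cos (pi / k) \<le> cos (pi / M s t)"
    using assms by (intro cos_monotone_0_pi_le) (auto simp: field_simps)
  then show ?thesis using assms by (simp add: coxeter_form_def)
qed

lemma coxeter_form_odd:
  assumes "s \<in> S" "t \<in> S" "s \<noteq> t" "odd (M s t)"
  shows "coxeter_form s t \<le> - 1 / 2"
proof -
  have "M s t \<noteq> 0" using assms(4) by (intro notI) simp
  with assms M_ge_2 have "M s t \<ge> 2" by blast
  with assms(4) have "M s t \<ge> 3" by presburger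
  then show ?thesis using coxeter_form_le_cos[of s t 3] \<open>M s t \<noteq> 0\<close> by (simp add: cos_60)
qed

lemma coxeter_form_even:
  assumes "s \<in> S" "t \<in> S" "s \<noteq> t" "even (M s t)" "M s t \<noteq> 2"
  shows "coxeter_form s t \<le> - (sqrt 2 / 2)"
proof (cases "M s t = 0")
  case True
  have "sqrt 2 < 2" by (rule real_less_lsqrt) auto
  with True show ?thesis by (simp add: coxeter_form_def)
next
  case False
  with assms M_ge_2 have "M s t \<ge> 2" by blast
  with assms(4,5) have "M s t \<ge> 4" by presburger
  then show ?thesis using coxeter_form_le_cos[of s t 4] False by (simp add: cos_45)
qed

lemma pairing_le_partial_sum:
  assumes t: "t \<in> K" and K: "K \<subseteq> S" and v: "\<And>u. u \<in> S \<Longrightarrow> 0 \<le> v u"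
  shows "pairing t v \<le> (\<Sum>u\<in>K. coxeter_form t u * v u)"
proof -
  have "pairing t v = (\<Sum>u\<in>K. coxeter_form t u * v u) + (\<Sum>u\<in>S - K. coxeter_form t u * v u)"
    unfolding pairing_def using K finite_S by (metis sum.subset_diff add.commute)
  moreover have "(\<Sum>u\<in>S - K. coxeter_form t u * v u) \<le> 0"
    using t K v coxeter_form_nonpos[of t] by (intro sum_nonpos mult_nonpos_nonneg) auto
  ultimately show ?thesis by simp
qed

lemma pairing_le_neighbours:
  assumes "t \<in> S" "x \<in> S" "y \<in> S" "x \<noteq> t" "y \<noteq> t" "x \<noteq> y" "\<And>u. u \<in> S \<Longrightarrow> 0 \<le> v u"
  shows "pairing t v \<le> v t + coxeter_form t x * v x + coxeter_form t y * v y"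
  using pairing_le_partial_sum[of t "{t, x, y}" v] assms coxeter_form_self[of t]
  by (simp add: add.assoc)

lemma pairing_le_neighbour:
  assumes "t \<in> S" "x \<in> S" "x \<noteq> t" "\<And>u. u \<in> S \<Longrightarrow> 0 \<le> v u"
  shows "pairing t v \<le> v t + coxeter_form t x * v x"
  using pairing_le_partial_sum[of t "{t, x}" v] assms coxeter_form_self[of t] by simp


lemma pairing_nonpos_two_neighbours:
  assumes "t \<in> S" "x \<in> S" "y \<in> S" "x \<noteq> t" "y \<noteq> t" "x \<noteq> y" "\<And>u. u \<in> S \<Longrightarrow> 0 \<le> v u"
    and "v t = 1" "coxeter_form t x * v x \<le> - 1 / 2" "coxeter_form t y * v y \<le> - 1 / 2"
  shows "pairing t v \<le> 0"
  using pairing_le_neighbours[of t x y v] assms by simp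

lemma mult_sqrt2_half_le: "c \<le> - (sqrt 2 / 2) \<Longrightarrow> c * (sqrt 2 / 2) \<le> - 1 / 2"
  using mult_right_mono[of c "- (sqrt 2 / 2)" "sqrt 2 / 2"] by simp

lemma no_heavy_triangle_on_odd_edge:
  assumes fin: "finite (carrier (coxeter_group S M))"
    and S: "u\<^sub>1 \<in> S" "u\<^sub>2 \<in> S" "w \<in> S" and d: "u\<^sub>1 \<noteq> u\<^sub>2" "u\<^sub>1 \<noteq> w" "u\<^sub>2 \<noteq> w"
    and odd: "odd (M u\<^sub>1 u\<^sub>2)"
    and heavy1: "even (M u\<^sub>1 w)" "M u\<^sub>1 w \<noteq> 2" and heavy2: "even (M u\<^sub>2 w)" "M u\<^sub>2 w \<noteq> 2"
  shows False
proof -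
  define v where "v = (\<lambda>x. if x = u\<^sub>1 \<or> x = u\<^sub>2 then 1 else if x = w then sqrt 2 / 2 else 0)"
  have v_nonneg: "0 \<le> v u" for u by (simp add: v_def)
  have "\<exists>t\<in>S. 0 < v t \<and> 0 < pairing t v"
    by (rule nonneg_vector_pairing_pos[OF fin, of v u\<^sub>1]) (use S in \<open>auto simp: v_def\<close>)
  then obtain t where t: "t \<in> S" "0 < v t" "0 < pairing t v" by blast
  have b12: "coxeter_form u\<^sub>1 u\<^sub>2 \<le> - 1 / 2" "coxeter_form u\<^sub>2 u\<^sub>1 \<le> - 1 / 2"
    using coxeter_form_odd[OF S(1,2) d(1) odd] coxeter_form_sym[OF S(1,2)] by auto
  have b1w: "coxeter_form u\<^sub>1 w \<le> - (sqrt 2 / 2)" "coxeter_form w u\<^sub>1 \<le> - (sqrt 2 / 2)"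
    using coxeter_form_even[OF S(1,3) d(2) heavy1] coxeter_form_sym[OF S(1,3)] by auto
  have b2w: "coxeter_form u\<^sub>2 w \<le> - (sqrt 2 / 2)" "coxeter_form w u\<^sub>2 \<le> - (sqrt 2 / 2)"
    using coxeter_form_even[OF S(2,3) d(3) heavy2] coxeter_form_sym[OF S(2,3)] by auto
  have v_vals: "v u\<^sub>1 = 1" "v u\<^sub>2 = 1" "v w = sqrt 2 / 2" using d by (simp_all add: v_def)
  from t(2) have "t = u\<^sub>1 \<or> t = u\<^sub>2 \<or> t = w" by (auto simp: v_def split: if_splits)
  then have "pairing t v \<le> 0"
  proof (elim disjE)
    assume "t = u\<^sub>1"
    then show ?thesis
      using pairing_nonpos_two_neighbours[of u\<^sub>1 u\<^sub>2 w v] S d v_nonneg v_vals b12 mult_sqrt2_half_le[OF b1w(1)]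
      by simp
  next
    assume "t = u\<^sub>2"
    then show ?thesis
      using pairing_nonpos_two_neighbours[of u\<^sub>2 u\<^sub>1 w v] S d v_nonneg v_vals b12 mult_sqrt2_half_le[OF b2w(1)]
      by simp
  next
    assume "t = w"
    then have "pairing t v \<le> sqrt 2 / 2 + coxeter_form w u\<^sub>1 + coxeter_form w u\<^sub>2"
      using pairing_le_neighbours[of w u\<^sub>1 u\<^sub>2 v] S d v_nonneg v_vals by simp
    moreover have "0 < sqrt 2 / (2::real)" by simp
    ultimately show ?thesis using b1w(2) b2w(2) by linarith
  qed
  with t(3) show False by simp
qed

lemma odd_path_vertex_pairing_nonpos:
  assumes a: "a \<in> S" and c: "c \<in> S" and ac: "a \<noteq> c"
    and p: "distinct p" "set p \<subseteq> S" "a \<notin> set p" "c \<notin> set p"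
    and p_odd: "\<And>i. Suc i < length p \<Longrightarrow> odd (M (p ! i) (p ! Suc i))"
    and v_nonneg: "\<And>u. 0 \<le> v u" and v_p: "\<And>x. x \<in> set p \<Longrightarrow> v x = 1"
    and v_a: "coxeter_form (hd p) a * v a \<le> - 1 / 2" and v_c: "coxeter_form (last p) c * v c \<le> - 1 / 2"
    and i: "i < length p"
  shows "pairing (p ! i) v \<le> 0"
proof -
  define n where "n = length p"
  have p_nth: "p ! j \<in> S" "p ! j \<noteq> a" "p ! j \<noteq> c" "v (p ! j) = 1" if "j < n" for j
    using that p nth_mem[of j p] v_p by (auto simp: n_def)
  have distinct_nth: "p ! j \<noteq> p ! k" if "j < n" "k < n" "j \<noteq> k" for j k
    using p(1) that by (simp add: n_def nth_eq_iff_index_eq)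
  have adj: "coxeter_form (p ! j) (p ! Suc j) * v (p ! Suc j) \<le> - 1 / 2
      \<and> coxeter_form (p ! Suc j) (p ! j) * v (p ! j) \<le> - 1 / 2" if "Suc j < n" for j
    using coxeter_form_odd[OF p_nth(1) p_nth(1) distinct_nth] p_odd coxeter_form_sym[OF p_nth(1) p_nth(1)]
      p_nth(4) that by (simp add: n_def)
  have "p \<noteq> []" using i by auto
  then have last_p: "last p = p ! (n - 1)" by (simp add: n_def last_conv_nth)
  define x where "x = (if i = 0 then a else p ! (i - 1))"
  define y where "y = (if i = n - 1 then c else p ! (i + 1))"
  have x: "x \<in> S" "x \<noteq> p ! i"
    using a i p_nth(1,2)[of i] p_nth(1)[of "i - 1"] distinct_nth[of "i - 1" i] by (auto simp: x_def n_def)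
  have y: "y \<in> S" "y \<noteq> p ! i"
    using c i p_nth(1,3)[of i] p_nth(1)[of "i + 1"] distinct_nth[of "i + 1" i] by (auto simp: y_def n_def)
  have "x \<noteq> y"
  proof (cases "i = 0")
    case True
    then show ?thesis using ac p_nth(2)[of "i + 1"] i by (auto simp: x_def y_def n_def)
  next
    case False
    have "i - 1 < n" using i by (simp add: n_def)
    with False show ?thesis
      using p_nth(3)[of "i - 1"] distinct_nth[of "i - 1" "i + 1"] i by (auto simp: x_def y_def n_def)
  qed
  moreover have "coxeter_form (p ! i) x * v x \<le> - 1 / 2"
    using v_a adj[of "i - 1"] i by (cases "i = 0") (auto simp: x_def n_def hd_conv_nth)
  moreover have "coxeter_form (p ! i) y * v y \<le> - 1 / 2"
    using v_c adj[of i] i last_p by (cases "i = n - 1") (auto simp: y_def n_def)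
  ultimately show ?thesis
    using pairing_nonpos_two_neighbours x y p_nth(1,4) i v_nonneg by (simp add: n_def)
qed

lemma no_odd_path_between_heavy_edges:
  assumes fin: "finite (carrier (coxeter_group S M))"
    and a: "a \<in> S" and c: "c \<in> S" and ac: "a \<noteq> c"
    and p: "p \<noteq> []" "distinct p" "set p \<subseteq> S" "a \<notin> set p" "c \<notin> set p"
    and p_odd: "\<And>i. Suc i < length p \<Longrightarrow> odd (M (p ! i) (p ! Suc i))"
    and heavy_a: "even (M a (hd p))" "M a (hd p) \<noteq> 2"
    and heavy_c: "even (M (last p) c)" "M (last p) c \<noteq> 2"
  shows False
proof -
  define v where "v = (\<lambda>x. if x = a \<or> x = c then sqrt 2 / 2 else if x \<in> set p then 1 else 0)"
  have v_nonneg: "0 \<le> v u" for u by (simp add: v_def)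
  have "\<exists>t\<in>S. 0 < v t \<and> 0 < pairing t v"
    by (rule nonneg_vector_pairing_pos[OF fin, of v a]) (use a c p in \<open>auto simp: v_def\<close>)
  then obtain t where t: "t \<in> S" "0 < v t" "0 < pairing t v" by blast
  have hd_p: "hd p \<in> S" "hd p \<noteq> a" "v (hd p) = 1" and last_p: "last p \<in> S" "last p \<noteq> c" "v (last p) = 1"
    using p hd_in_set[of p] last_in_set[of p] by (auto simp: v_def)
  have "coxeter_form a (hd p) \<le> - (sqrt 2 / 2)" "coxeter_form c (last p) \<le> - (sqrt 2 / 2)"
    using coxeter_form_even[OF a hd_p(1) _ heavy_a] coxeter_form_even[OF last_p(1) c _ heavy_c]
      coxeter_form_sym[OF c last_p(1)] hd_p(2) last_p(2) by auto
  then have ba: "coxeter_form a (hd p) * v (hd p) \<le> - (sqrt 2 / 2)" "coxeter_form (hd p) a * v a \<le> - 1 / 2"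
    and bc: "coxeter_form c (last p) * v (last p) \<le> - (sqrt 2 / 2)" "coxeter_form (last p) c * v c \<le> - 1 / 2"
    using coxeter_form_sym[OF a hd_p(1)] coxeter_form_sym[OF c last_p(1)] hd_p(3) last_p(3) mult_sqrt2_half_le
    by (simp_all add: v_def)
  from t(2) have "t = a \<or> t = c \<or> t \<in> set p" by (auto simp: v_def split: if_splits)
  then have "pairing t v \<le> 0"
  proof (elim disjE)
    assume "t = a"
    then show ?thesis using pairing_le_neighbour[of a "hd p" v] a hd_p v_nonneg ba(1) by (simp add: v_def)
  next
    assume "t = c"
    then show ?thesis using pairing_le_neighbour[of c "last p" v] c last_p v_nonneg bc(1) ac by (simp add: v_def)
  next
    assume "t \<in> set p"
    then obtain i where i: "i < length p" "t = p ! i" by (auto simp: in_set_conv_nth)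
    have "v x = 1" if "x \<in> set p" for x using that p(4,5) by (auto simp: v_def)
    from odd_path_vertex_pairing_nonpos[OF a c ac p(2-5) p_odd v_nonneg this ba(2) bc(2) i(1)]
    show ?thesis using i(2) by simp
  qed
  with t(3) show False by simp
qed

lemma odd_rel_path:
  assumes "(x, y) \<in> odd_rel\<^sup>*" and x: "x \<in> S"
  shows "\<exists>p. p \<noteq> [] \<and> hd p = x \<and> last p = y \<and> distinct p \<and> set p \<subseteq> S \<and>
            (\<forall>z\<in>set p. (x, z) \<in> odd_rel\<^sup>*) \<and> (\<forall>i. Suc i < length p \<longrightarrow> (p ! i, p ! Suc i) \<in> odd_rel)"
  using assms(1)
proof (induction rule: rtrancl_induct)
  case base
  show ?case using x by (intro exI[of _ "[x]"]) auto
next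
  case (step y z)
  then obtain p where p: "p \<noteq> []" "hd p = x" "last p = y" "distinct p" "set p \<subseteq> S"
    "\<forall>w\<in>set p. (x, w) \<in> odd_rel\<^sup>*" "\<forall>i. Suc i < length p \<longrightarrow> (p ! i, p ! Suc i) \<in> odd_rel"
    by blast
  show ?case
  proof (cases "z \<in> set p")
    case True
    then obtain k where k: "k < length p" "p ! k = z" by (auto simp: in_set_conv_nth)
    define q where "q = take (Suc k) p"
    have "q \<noteq> []" "hd q = x" "distinct q" using p k by (simp_all add: q_def hd_take)
    moreover have "last q = z" using k by (simp add: q_def take_Suc_conv_app_nth)
    moreover have "set q \<subseteq> S" "\<forall>w\<in>set q. (x, w) \<in> odd_rel\<^sup>*"
      using p(5,6) unfolding q_def by (auto dest: in_set_takeD)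
    moreover have "\<forall>i. Suc i < length q \<longrightarrow> (q ! i, q ! Suc i) \<in> odd_rel"
      using p(7) by (auto simp: q_def)
    ultimately show ?thesis by blast
  next
    case False
    have "(p @ [z]) ! i = last p" "(p @ [z]) ! Suc i = z" if "Suc i = length p" for i
      using that p(1) by (auto simp: nth_append last_conv_nth simp flip: that)
    then have "(\<forall>i. Suc i < length (p @ [z]) \<longrightarrow> ((p @ [z]) ! i, (p @ [z]) ! Suc i) \<in> odd_rel)"
      using p(3,7) step(2) by (auto simp: nth_append less_Suc_eq)
    moreover have "z \<in> S" using step(2) by (auto simp: odd_rel_def)
    ultimately show ?thesis
      using p False step by (intro exI[of _ "p @ [z]"]) auto
  qed
qed

lemma no_heavy_edges_around_odd_class:
  assumes fin: "finite (carrier (coxeter_group S M))"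
    and S: "a \<in> S" "b \<in> S" "b' \<in> S" "c \<in> S"
    and ab: "(a, b) \<notin> odd_rel\<^sup>*" and bb': "(b, b') \<in> odd_rel\<^sup>*" and b'c: "(b', c) \<notin> odd_rel\<^sup>*"
    and ac: "(a, c) \<notin> odd_rel\<^sup>*"
    and heavy: "M a b \<noteq> 2" "M b' c \<noteq> 2"
  shows False
proof -
  obtain p where p: "p \<noteq> []" "hd p = b" "last p = b'" "distinct p" "set p \<subseteq> S"
    "\<forall>w\<in>set p. (b, w) \<in> odd_rel\<^sup>*" "\<forall>i. Suc i < length p \<longrightarrow> (p ! i, p ! Suc i) \<in> odd_rel"
    using odd_rel_path[OF bb' S(2)] by blast
  have "a \<notin> set p" using p(6) ab odd_rel_rtrancl_sym by blast
  moreover have "c \<notin> set p"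
    using p(6) b'c odd_rel_rtrancl_sym[OF bb'] by (meson rtrancl_trans)
  moreover have "even (M a b)" "even (M b' c)" using even_if_not_odd_rel S ab b'c by auto
  moreover have "a \<noteq> c" using ac by auto
  ultimately show False
    using no_odd_path_between_heavy_edges[OF fin S(1,4) _ p(1,4,5)] p(2,3,7) heavy
    by (auto simp: odd_rel_def)
qed

lemma isolated_odd_class:
  assumes "\<forall>u. (s, u) \<notin> odd_rel" "(s, x) \<in> odd_rel\<^sup>*"
  shows "x = s"
  using assms(2,1) by (induction rule: converse_rtrancl_induct) auto

definition coxeter_edge :: "('a \<times> 'a) set" where
  "coxeter_edge = {(x, y). x \<in> S \<and> y \<in> S \<and> x \<noteq> y \<and> M x y \<noteq> 2}"

lemma irreducible_connected:
  "coxeter_irreducible S M \<Longrightarrow> s \<in> S \<Longrightarrow> t \<in> S \<Longrightarrow> (s, t) \<in> coxeter_edge\<^sup>*"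
  unfolding coxeter_irreducible_def coxeter_edge_def by blast

lemma odd_class_trivial_if_heavy:
  assumes fin: "finite (carrier (coxeter_group S M))"
    and x: "x \<in> S" and y: "y \<in> S" and xy: "(x, y) \<notin> odd_rel\<^sup>*"
    and heavy: "\<And>u v. u \<in> S \<Longrightarrow> v \<in> S \<Longrightarrow> (x, u) \<in> odd_rel\<^sup>* \<Longrightarrow> (y, v) \<in> odd_rel\<^sup>* \<Longrightarrow> M u v \<noteq> 2"
    and z: "(x, z) \<in> odd_rel\<^sup>*"
  shows "z = x"
proof (rule isolated_odd_class[OF _ z], intro allI notI)
  fix u
  assume xu: "(x, u) \<in> odd_rel"
  then have u: "u \<in> S" "x \<noteq> u" "odd (M x u)" by (auto simp: odd_rel_def)
  have uy: "(u, y) \<notin> odd_rel\<^sup>*" using xu xy by (meson converse_rtrancl_into_rtrancl)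
  show False
  proof (rule no_heavy_triangle_on_odd_edge[OF fin x u(1) y u(2) _ _ u(3)])
    show "x \<noteq> y" "u \<noteq> y" using xy uy by auto
    show "even (M x y)" "even (M u y)" using even_if_not_odd_rel x y uy u(1) xy by auto
    show "M x y \<noteq> 2" "M u y \<noteq> 2" using heavy x y u(1) xu by auto
  qed
qed

lemma distinct_odd_classes_commuting_pair:
  assumes fin: "finite (carrier (coxeter_group S M))"
    and irr: "coxeter_irreducible S M"
    and not_even_rank_2: "\<not> (card S = 2 \<and> (\<forall>s\<in>S. \<forall>t\<in>S. s \<noteq> t \<longrightarrow> even (M s t)))"
    and s: "s \<in> S" and t: "t \<in> S" and st: "(s, t) \<notin> odd_rel\<^sup>*"
  shows "\<exists>u v. u \<in> S \<and> v \<in> S \<and> (s, u) \<in> odd_rel\<^sup>* \<and> (t, v) \<in> odd_rel\<^sup>* \<and> M u v = 2"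
proof (rule ccontr)
  assume "\<not> ?thesis"
  then have heavy: "M u v \<noteq> 2 \<and> M v u \<noteq> 2"
    if "u \<in> S" "v \<in> S" "(s, u) \<in> odd_rel\<^sup>*" "(t, v) \<in> odd_rel\<^sup>*" for u v
    using that M_sym by metis
  have ts: "(t, s) \<notin> odd_rel\<^sup>*" using st odd_rel_rtrancl_sym by blast
  have s_class: "x = s" if "(s, x) \<in> odd_rel\<^sup>*" for x
    using odd_class_trivial_if_heavy[OF fin s t st _ that] heavy by blast
  have t_class: "x = t" if "(t, x) \<in> odd_rel\<^sup>*" for x
    using odd_class_trivial_if_heavy[OF fin t s ts _ that] heavy by blast
  have st_heavy: "M s t \<noteq> 2" "M t s \<noteq> 2" using heavy s t by auto
  show False
  proof (cases "S = {s, t}")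
    case True
    moreover have "s \<noteq> t" using st by auto
    ultimately have "card S = 2" "\<forall>x\<in>S. \<forall>y\<in>S. x \<noteq> y \<longrightarrow> even (M x y)"
      using st ts even_if_not_odd_rel s t by auto
    then show False using not_even_rank_2 by blast
  next
    case False
    then obtain c where c: "c \<in> S" "c \<notin> {s, t}" using s t by blast
    then obtain x y where xy: "x \<in> {s, t}" "y \<notin> {s, t}" "(x, y) \<in> coxeter_edge"
      using rtrancl_exits[OF irreducible_connected[OF irr s c(1)]] by blast
    then have y: "y \<in> S" "M x y \<noteq> 2" "M y x \<noteq> 2" by (auto simp: coxeter_edge_def M_sym)
    have "(y, s) \<notin> odd_rel\<^sup>*" "(y, t) \<notin> odd_rel\<^sup>*"
      using s_class t_class xy(2) odd_rel_rtrancl_sym by blast+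
    with xy(1) show False
      using no_heavy_edges_around_odd_class[OF fin y(1) s s t _ _ st] st_heavy
        no_heavy_edges_around_odd_class[OF fin y(1) t t s _ _ ts] y
      by auto
  qed
qed

lemma odd_classes_commuting_representatives:
  assumes fin: "finite (carrier (coxeter_group S M))"
    and irr: "coxeter_irreducible S M"
    and not_even_rank_2: "\<not> (card S = 2 \<and> (\<forall>s\<in>S. \<forall>t\<in>S. s \<noteq> t \<longrightarrow> even (M s t)))"
    and s: "s \<in> S" and t: "t \<in> S"
  shows "\<exists>u v. u \<in> S \<and> v \<in> S \<and> (s, u) \<in> odd_rel\<^sup>* \<and> (t, v) \<in> odd_rel\<^sup>* \<and> (u = v \<or> M u v = 2)"
proof (cases "(s, t) \<in> odd_rel\<^sup>*")
  case True
  then show ?thesis using t by blast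
next
  case False
  then show ?thesis using distinct_odd_classes_commuting_pair[OF assms] by blast
qed

lemma odd_class_adjacent_to_base:
  assumes fin: "finite (carrier (coxeter_group S M))"
    and irr: "coxeter_irreducible S M" and s\<^sub>0: "s\<^sub>0 \<in> S" and x: "x \<in> S"
  shows "(s\<^sub>0, x) \<in> odd_rel\<^sup>* \<or> (\<exists>y z. (s\<^sub>0, y) \<in> odd_rel\<^sup>* \<and> (z, x) \<in> odd_rel\<^sup>* \<and> (y, z) \<in> coxeter_edge)"
  using irreducible_connected[OF irr s\<^sub>0 x]
proof (induction rule: rtrancl_induct)
  case (step x x')
  then have x: "x \<in> S" and x': "x' \<in> S" "M x x' \<noteq> 2" by (auto simp: coxeter_edge_def)
  show ?case
  proof (cases "(s\<^sub>0, x) \<in> odd_rel\<^sup>* \<or> (s\<^sub>0, x') \<in> odd_rel\<^sup>*")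
    case True
    then show ?thesis using step(2) by blast
  next
    case False
    with step.IH obtain y z where yz: "(s\<^sub>0, y) \<in> odd_rel\<^sup>*" "(z, x) \<in> odd_rel\<^sup>*" "(y, z) \<in> coxeter_edge"
      by blast
    have "(x, x') \<in> odd_rel\<^sup>*"
    proof (rule ccontr)
      assume xx': "(x, x') \<notin> odd_rel\<^sup>*"
      have "(y, z) \<notin> odd_rel\<^sup>*" "(y, x') \<notin> odd_rel\<^sup>*"
        using False yz(1,2) by (meson rtrancl_trans)+
      then show False
        using no_heavy_edges_around_odd_class[OF fin _ _ x x'(1) _ yz(2) xx' _ _ x'(2)] yz(3)
        by (auto simp: coxeter_edge_def)
    qed
    then show ?thesis using yz by (meson rtrancl_trans)
  qed
qed simp

lemma at_most_two_odd_classes: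
  assumes fin: "finite (carrier (coxeter_group S M))" and irr: "coxeter_irreducible S M"
  obtains a where "a \<in> S" "\<forall>x\<in>S. (a, x) \<in> odd_rel\<^sup>*"
  | a b where "a \<in> S" "b \<in> S" "(a, b) \<notin> odd_rel\<^sup>*" "\<forall>x\<in>S. (a, x) \<in> odd_rel\<^sup>* \<or> (b, x) \<in> odd_rel\<^sup>*"
proof -
  obtain s\<^sub>0 where s\<^sub>0: "s\<^sub>0 \<in> S" using irr unfolding coxeter_irreducible_def by blast
  show ?thesis
  proof (cases "\<forall>x\<in>S. (s\<^sub>0, x) \<in> odd_rel\<^sup>*")
    case True
    then show ?thesis using that(1) s\<^sub>0 by blast
  next
    case False
    then obtain s\<^sub>1 where s\<^sub>1: "s\<^sub>1 \<in> S" "(s\<^sub>0, s\<^sub>1) \<notin> odd_rel\<^sup>*" by blast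
    obtain y z where yz: "(s\<^sub>0, y) \<in> odd_rel\<^sup>*" "(z, s\<^sub>1) \<in> odd_rel\<^sup>*" "(y, z) \<in> coxeter_edge"
      using odd_class_adjacent_to_base[OF fin irr s\<^sub>0 s\<^sub>1(1)] s\<^sub>1(2) by blast
    have "(s\<^sub>1, x) \<in> odd_rel\<^sup>*" if x: "x \<in> S" "(s\<^sub>0, x) \<notin> odd_rel\<^sup>*" for x
    proof -
      obtain y' z' where yz': "(s\<^sub>0, y') \<in> odd_rel\<^sup>*" "(z', x) \<in> odd_rel\<^sup>*" "(y', z') \<in> coxeter_edge"
        using odd_class_adjacent_to_base[OF fin irr s\<^sub>0 x(1)] x(2) by blast
      have "(z, z') \<in> odd_rel\<^sup>*"
      proof (rule ccontr)
        assume zz': "(z, z') \<notin> odd_rel\<^sup>*"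
        have "(s\<^sub>0, z) \<notin> odd_rel\<^sup>*" "(s\<^sub>0, z') \<notin> odd_rel\<^sup>*"
          using s\<^sub>1(2) x(2) yz(2) yz'(2) by (meson rtrancl_trans)+
        then have "(z, y) \<notin> odd_rel\<^sup>*" "(y, y') \<in> odd_rel\<^sup>*" "(y', z') \<notin> odd_rel\<^sup>*"
          using yz(1) yz'(1) odd_rel_rtrancl_sym by (meson rtrancl_trans)+
        then show False
          using no_heavy_edges_around_odd_class[OF fin _ _ _ _ _ _ _ zz'] yz(3) yz'(3)
          by (auto simp: coxeter_edge_def M_sym)
      qed
      then show ?thesis
        using yz(2) yz'(2) odd_rel_rtrancl_sym by (meson rtrancl_trans)
    qed
    then show ?thesis using that(2) s\<^sub>0 s\<^sub>1 by blast
  qed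
qed

section \<open>Artin-Tits groups\<close>

sublocale A: presentation S "braid_rels S M"
  by unfold_locales (auto simp: braid_rels_def alt_words)

abbreviation artin :: "'a word set monoid" where
  "artin \<equiv> artin_tits_group S M"

lemma artin_tits_group_eq: "artin = presented_group S (braid_rels S M)"
  by (simp add: artin_tits_group_def)

lemma group_artin: "group artin"
  unfolding artin_tits_group_eq by (rule A.group_presented_group)

lemma artin_generator_closed: "s \<in> S \<Longrightarrow> A.generator s \<in> carrier artin"
  using A.generator_closed by (auto simp: artin_tits_group_eq)

lemma artin_braid:
  assumes s: "s \<in> S" and t: "t \<in> S" and st: "s \<noteq> t" and m: "M s t \<noteq> 0"
  shows "A.word_class (alt s t (M s t)) = A.word_class (alt t s (M s t))"
  using A.word_class_relator s t st m by (auto simp: braid_rels_def)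

lemma artin_generators_conjugate:
  assumes st: "(s, t) \<in> odd_rel"
  shows "\<exists>g\<in>carrier artin. A.generator t = g \<otimes>\<^bsub>artin\<^esub> A.generator s \<otimes>\<^bsub>artin\<^esub> inv\<^bsub>artin\<^esub> g"
proof -
  interpret group artin by (rule group_artin)
  from st have s: "s \<in> S" and t: "t \<in> S" and ne: "s \<noteq> t" and odd: "odd (M s t)"
    by (auto simp: odd_rel_def)
  obtain k where k: "M s t = Suc (2 * k)" using odd oddE by (metis Suc_eq_plus1)
  define g where "g = A.word_class (alt s t (2 * k))"
  have g: "g \<in> carrier artin" using alt_words[OF s t] by (simp add: g_def artin_tits_group_eq A.carrier_presented_group)
  have "alt s t (M s t) = alt s t (2 * k) @ [(s, True)]" "alt t s (M s t) = (t, True) # alt s t (2 * k)"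
    using k alt_Suc_snoc[of s t "2 * k"] by simp_all
  then have "g \<otimes>\<^bsub>artin\<^esub> A.generator s = A.generator t \<otimes>\<^bsub>artin\<^esub> g"
    using artin_braid[OF s t ne] k alt_words[OF s t] s t
    by (simp add: g_def A.generator_def artin_tits_group_eq A.mult_word_class)
  then have "A.generator t = g \<otimes>\<^bsub>artin\<^esub> A.generator s \<otimes>\<^bsub>artin\<^esub> inv\<^bsub>artin\<^esub> g"
    using g artin_generator_closed[OF s] artin_generator_closed[OF t] by (simp add: m_assoc)
  then show ?thesis using g by blast
qed

lemma artin_generators_commute:
  assumes u: "u \<in> S" and v: "v \<in> S" and m: "u = v \<or> M u v = 2"
  shows "A.generator u \<otimes>\<^bsub>artin\<^esub> A.generator v = A.generator v \<otimes>\<^bsub>artin\<^esub> A.generator u"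
  using m
proof
  assume m: "M u v = 2"
  then have "u \<noteq> v" using M_self[OF u] by auto
  moreover have "alt u v 2 = [(u, True), (v, True)]" "alt v u 2 = [(v, True), (u, True)]"
    by (simp_all add: numeral_2_eq_2)
  ultimately show ?thesis
    using artin_braid[OF u v] m u v by (simp add: A.generator_def artin_tits_group_eq A.mult_word_class)
qed simp

lemma artin_generator_odd_class:
  assumes "(u, s) \<in> odd_rel\<^sup>*" and u: "u \<in> S"
  shows "\<exists>d\<in>lower_central artin 2. A.generator s = A.generator u \<otimes>\<^bsub>artin\<^esub> d"
  using assms(1)
proof (induction rule: rtrancl_induct)
  interpret group artin by (rule group_artin)
  case base
  have "A.generator u = A.generator u \<otimes>\<^bsub>artin\<^esub> \<one>\<^bsub>artin\<^esub>"
    using artin_generator_closed[OF u] by simp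
  then show ?case using lower_central_2_subgroup subgroup.one_closed by blast
next
  interpret group artin by (rule group_artin)
  case (step s s')
  obtain d where d: "d \<in> lower_central artin 2" "A.generator s = A.generator u \<otimes>\<^bsub>artin\<^esub> d"
    using step.IH by blast
  have s: "s \<in> S" using step(2) by (auto simp: odd_rel_def)
  obtain g where g: "g \<in> carrier artin" "A.generator s' = g \<otimes>\<^bsub>artin\<^esub> A.generator s \<otimes>\<^bsub>artin\<^esub> inv\<^bsub>artin\<^esub> g"
    using artin_generators_conjugate[OF step(2)] by blast
  obtain e where e: "e \<in> lower_central artin 2" "A.generator s' = A.generator s \<otimes>\<^bsub>artin\<^esub> e"
    using conj_in_lower_central_2_coset[OF g(1) artin_generator_closed[OF s]] unfolding g(2) by blast
  have "d \<in> carrier artin" "e \<in> carrier artin" using d(1) e(1) lower_central_2_subset by auto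
  then have "A.generator s' = A.generator u \<otimes>\<^bsub>artin\<^esub> (d \<otimes>\<^bsub>artin\<^esub> e)"
    using d(2) e(2) m_assoc[OF artin_generator_closed[OF u]] by simp
  moreover have "d \<otimes>\<^bsub>artin\<^esub> e \<in> lower_central artin 2"
    by (rule subgroup.m_closed[OF lower_central_2_subgroup d(1) e(1)])
  ultimately show ?case by blast
qed

lemma artin_generated: "carrier artin = eval_word artin A.generator ` words S"
  unfolding artin_tits_group_eq by (rule A.carrier_presented_group_eval)

lemma artin_lower_central_2_eq_3:
  assumes fin: "finite (carrier (coxeter_group S M))"
    and irr: "coxeter_irreducible S M"
    and not_even_rank_2: "\<not> (card S = 2 \<and> (\<forall>s\<in>S. \<forall>t\<in>S. s \<noteq> t \<longrightarrow> even (M s t)))"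
  shows "lower_central artin 2 = lower_central artin 3"
proof -
  interpret B: group artin by (rule group_artin)
  show ?thesis
  proof (rule B.lower_central_2_eq_3_if_generators_commute[OF artin_generated])
    show "A.generator ` S \<subseteq> carrier artin" using artin_generator_closed by auto
    fix s t
    assume s: "s \<in> S" and t: "t \<in> S"
    obtain u v where uv: "u \<in> S" "v \<in> S" "(s, u) \<in> odd_rel\<^sup>*" "(t, v) \<in> odd_rel\<^sup>*" "u = v \<or> M u v = 2"
      using odd_classes_commuting_representatives[OF fin irr not_even_rank_2 s t] by blast
    obtain d\<^sub>1 where d\<^sub>1: "d\<^sub>1 \<in> lower_central artin 2" "A.generator s = A.generator u \<otimes>\<^bsub>artin\<^esub> d\<^sub>1"
      using artin_generator_odd_class[OF odd_rel_rtrancl_sym[OF uv(3)] uv(1)] by blast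
    obtain d\<^sub>2 where d\<^sub>2: "d\<^sub>2 \<in> lower_central artin 2" "A.generator t = A.generator v \<otimes>\<^bsub>artin\<^esub> d\<^sub>2"
      using artin_generator_odd_class[OF odd_rel_rtrancl_sym[OF uv(4)] uv(2)] by blast
    show "A.generator s \<otimes>\<^bsub>artin\<^esub> A.generator t \<otimes>\<^bsub>artin\<^esub> inv\<^bsub>artin\<^esub> A.generator s
        \<otimes>\<^bsub>artin\<^esub> inv\<^bsub>artin\<^esub> A.generator t \<in> lower_central artin 3"
      unfolding d\<^sub>1(2) d\<^sub>2(2) using artin_generator_closed uv(1,2)
      by (intro B.commute_mod_lower_central_3 artin_generators_commute d\<^sub>1(1) d\<^sub>2(1) uv(5))
  qed
qed

lemma exp_sum_pres_eq:
  assumes P: "\<And>s t. (s, t) \<in> odd_rel \<Longrightarrow> P s = P t"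
    and "(u, v) \<in> pres_eq S (braid_rels S M)"
  shows "exp_sum P u = exp_sum P v"
  using assms(2)
proof (induction rule: pres_eq.induct)
  case (rel l r u v)
  then obtain s t where st: "s \<in> S" "t \<in> S" "s \<noteq> t" "l = alt s t (M s t)" "r = alt t s (M s t)"
    unfolding braid_rels_def by blast
  have "P s = P t \<or> even (M s t)" using P st by (auto simp: odd_rel_def)
  then show ?case using st exp_sum_alt_swap by simp
qed auto

lemma word_class_in_lower_central_2:
  assumes a: "a \<in> S" and b: "b \<in> S"
    and classes: "\<And>x. x \<in> S \<Longrightarrow> (if P x then (a, x) else (b, x)) \<in> odd_rel\<^sup>*"
    and w: "w \<in> words S" and exp_sums: "exp_sum P w = 0" "exp_sum (\<lambda>x. \<not> P x) w = 0"
  shows "A.word_class w \<in> lower_central artin 2"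
proof -
  interpret B: group artin by (rule group_artin)
  interpret N: normal "lower_central artin 2" artin by (rule B.lower_central_2_normal)
  let ?Q = "artin Mod lower_central artin 2" and ?p = "\<lambda>x. lower_central artin 2 #>\<^bsub>artin\<^esub> x"
  interpret p: group_hom artin ?Q ?p by (rule N.rcos_group_hom)
  interpret Q: comm_group ?Q by (rule B.comm_group_Mod_lower_central_2)
  have class_rep: "?p (A.generator x) = ?p (A.generator c)" if cx: "(c, x) \<in> odd_rel\<^sup>*" and c: "c \<in> S" for c x
  proof -
    obtain d where d: "d \<in> lower_central artin 2" "A.generator x = A.generator c \<otimes>\<^bsub>artin\<^esub> d"
      using artin_generator_odd_class[OF cx c] by blast
    have d_closed: "d \<in> carrier artin" using d(1) B.lower_central_2_subset by auto
    have "?p d = \<one>\<^bsub>?Q\<^esub>" using B.coset_join2[OF d_closed N.subgroup_axioms d(1)] by simp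
    then have "?p (A.generator x) = ?p (A.generator c) \<otimes>\<^bsub>?Q\<^esub> \<one>\<^bsub>?Q\<^esub>"
      using p.hom_mult[OF artin_generator_closed[OF c] d_closed] by (simp only: d(2))
    then show ?thesis using p.hom_closed[OF artin_generator_closed[OF c]] by (simp only: p.H.r_one)
  qed
  have "?p (A.word_class w) = eval_word ?Q (?p \<circ> A.generator) w"
    using A.word_class_eq_eval_word[OF w] p.eval_word_hom[OF _ w] artin_generator_closed
    by (auto simp: artin_tits_group_eq)
  also have "\<dots> = ?p (A.generator a) [^]\<^bsub>?Q\<^esub> exp_sum P w \<otimes>\<^bsub>?Q\<^esub> ?p (A.generator b) [^]\<^bsub>?Q\<^esub> exp_sum (\<lambda>x. \<not> P x) w"
  proof (rule Q.eval_word_two_valued[OF _ _ _ w])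
    fix x
    assume x: "x \<in> S"
    show "(?p \<circ> A.generator) x = (if P x then ?p (A.generator a) else ?p (A.generator b))"
      using classes[OF x] class_rep[of a x] class_rep[of b x] a b by (cases "P x") simp_all
  qed (use a b artin_generator_closed in auto)
  also have "\<dots> = \<one>\<^bsub>?Q\<^esub>"
    using artin_generator_closed a b by (simp add: exp_sums del: mult_FactGroup one_FactGroup)
  finally have "?p (A.word_class w) = lower_central artin 2" by simp
  then show ?thesis
    using B.coset_join1 N.subgroup_axioms A.carrier_presented_group w by (auto simp: artin_tits_group_eq)
qed

lemma artin_abelianization_iso:
  assumes H: "comm_group H" and h: "h \<in> hom artin H" and surj: "h ` carrier artin = carrier H"
    and a: "a \<in> S" and b: "b \<in> S"
    and classes: "\<And>x. x \<in> S \<Longrightarrow> (if P x then (a, x) else (b, x)) \<in> odd_rel\<^sup>*"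
    and kernel: "\<And>w. w \<in> words S \<Longrightarrow> h (A.word_class w) = \<one>\<^bsub>H\<^esub> \<Longrightarrow>
      exp_sum P w = 0 \<and> exp_sum (\<lambda>x. \<not> P x) w = 0"
  shows "artin Mod lower_central artin 2 \<cong> H"
proof -
  interpret B: group artin by (rule group_artin)
  interpret H: comm_group H by (rule H)
  interpret h: group_hom artin H h
    using h by (simp add: group_hom_def group_hom_axioms_def B.is_group H.is_group)
  have "kernel artin H h = lower_central artin 2"
  proof
    show "kernel artin H h \<subseteq> lower_central artin 2"
    proof
      fix x
      assume "x \<in> kernel artin H h"
      then obtain w where "w \<in> words S" "x = A.word_class w" "h (A.word_class w) = \<one>\<^bsub>H\<^esub>"
        by (auto simp: kernel_def artin_tits_group_eq A.carrier_presented_group)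
      then show "x \<in> lower_central artin 2"
        using word_class_in_lower_central_2[OF a b classes] kernel by blast
    qed
    have "h ` lower_central artin 2 = derived H (carrier H)"
      using h.derived_img[of "carrier artin"] surj by (simp add: lower_central_2)
    also have "\<dots> = {\<one>\<^bsub>H\<^esub>}" by (simp add: H.derived_eq_singleton)
    finally show "lower_central artin 2 \<subseteq> kernel artin H h"
      using B.lower_central_2_subset by (auto simp: kernel_def)
  qed
  then show ?thesis using h.FactGroup_iso[OF surj] by simp
qed

lemma artin_abelianization_int:
  assumes a: "a \<in> S" and one_class: "\<forall>x\<in>S. (a, x) \<in> odd_rel\<^sup>*"
  shows "artin Mod lower_central artin 2 \<cong> integer_group"
proof (rule artin_abelianization_iso[OF abelian_integer_group _ _ a a])
  let ?h = "A.induced_fun (exp_sum (\<lambda>x. True))"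
  have h_word: "?h (A.word_class w) = exp_sum (\<lambda>x. True) w" if "w \<in> words S" for w
    using A.induced_fun_word_class[OF exp_sum_pres_eq that] by simp
  show "?h \<in> hom artin integer_group"
    unfolding artin_tits_group_eq using exp_sum_pres_eq by (intro A.induced_fun_hom) auto
  show "?h ` carrier artin = carrier integer_group"
  proof -
    have "n \<in> ?h ` carrier artin" for n
    proof (rule image_eqI)
      show "n = ?h (A.word_class (power_word a n))" using h_word[OF power_word_words[OF a]] by simp
      show "A.word_class (power_word a n) \<in> carrier artin"
        using power_word_words[OF a] by (simp add: artin_tits_group_eq A.carrier_presented_group)
    qed
    then show ?thesis by auto
  qed
  show "(if True then (a, x) else (a, x)) \<in> odd_rel\<^sup>*" if "x \<in> S" for x
    using one_class that by simp
  show "exp_sum (\<lambda>x. True) w = 0 \<and> exp_sum (\<lambda>x. \<not> True) w = 0"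
    if "w \<in> words S" "?h (A.word_class w) = \<one>\<^bsub>integer_group\<^esub>" for w
    using that h_word by simp
qed

lemma artin_abelianization_int_int:
  assumes a: "a \<in> S" and b: "b \<in> S" and ab: "(a, b) \<notin> odd_rel\<^sup>*"
    and two_classes: "\<forall>x\<in>S. (a, x) \<in> odd_rel\<^sup>* \<or> (b, x) \<in> odd_rel\<^sup>*"
  shows "artin Mod lower_central artin 2 \<cong> integer_group \<times>\<times> integer_group"
proof (rule artin_abelianization_iso[OF comm_group_int_int _ _ a b])
  let ?P = "\<lambda>x. (a, x) \<in> odd_rel\<^sup>*"
  let ?f = "\<lambda>w. (exp_sum ?P w, exp_sum (\<lambda>x. \<not> ?P x) w)"
  have P: "?P s = ?P t" "(\<not> ?P s) = (\<not> ?P t)" if "(s, t) \<in> odd_rel" for s t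
    using that odd_rel_sym by (meson rtrancl.rtrancl_into_rtrancl)+
  have f_pres: "?f u = ?f v" if "(u, v) \<in> pres_eq S (braid_rels S M)" for u v
    using exp_sum_pres_eq[OF P(1) that] exp_sum_pres_eq[OF P(2) that] by simp
  have h_word: "A.induced_fun ?f (A.word_class w) = ?f w" if "w \<in> words S" for w
    using A.induced_fun_word_class[OF f_pres that] by simp
  show "A.induced_fun ?f \<in> hom artin (integer_group \<times>\<times> integer_group)"
    unfolding artin_tits_group_eq using f_pres by (intro A.induced_fun_hom) (auto simp: DirProd_def)
  show "A.induced_fun ?f ` carrier artin = carrier (integer_group \<times>\<times> integer_group)"
  proof -
    have "(m, n) \<in> A.induced_fun ?f ` carrier artin" for m n
    proof (rule image_eqI)
      have "power_word a m @ power_word b n \<in> words S"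
        using power_word_words[OF a] power_word_words[OF b] by simp
      then show "(m, n) = A.induced_fun ?f (A.word_class (power_word a m @ power_word b n))"
        and "A.word_class (power_word a m @ power_word b n) \<in> carrier artin"
        using h_word ab by (simp_all add: artin_tits_group_eq A.carrier_presented_group)
    qed
    then show ?thesis by (auto simp: DirProd_def)
  qed
  show "(if ?P x then (a, x) else (b, x)) \<in> odd_rel\<^sup>*" if "x \<in> S" for x
    using two_classes that by auto
  show "exp_sum ?P w = 0 \<and> exp_sum (\<lambda>x. \<not> ?P x) w = 0"
    if "w \<in> words S" "A.induced_fun ?f (A.word_class w) = \<one>\<^bsub>integer_group \<times>\<times> integer_group\<^esub>" for w
    using that h_word by (simp add: DirProd_def)
qed

end

theorem proposition2p2:
  fixes S :: "'a set" and M :: "'a \<Rightarrow> 'a \<Rightarrow> nat"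
  assumes "finite S"
    and "coxeter_matrix S M"
    and "finite (carrier (coxeter_group S M))"
    and "coxeter_irreducible S M"
    and "\<not> (card S = 2 \<and> (\<forall>s\<in>S. \<forall>t\<in>S. s \<noteq> t \<longrightarrow> even (M s t)))"
  shows "(artin_tits_group S M Mod lower_central (artin_tits_group S M) 2 \<cong> integer_group
          \<or> artin_tits_group S M Mod lower_central (artin_tits_group S M) 2
              \<cong> integer_group \<times>\<times> integer_group)
       \<and> lower_central (artin_tits_group S M) 2 = lower_central (artin_tits_group S M) 3"
proof -
  interpret coxeter_system S M using assms(1,2) by unfold_locales
  have "artin Mod lower_central artin 2 \<cong> integer_group
      \<or> artin Mod lower_central artin 2 \<cong> integer_group \<times>\<times> integer_group"
    using at_most_two_odd_classes[OF assms(3,4)] artin_abelianization_int artin_abelianization_int_int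
    by metis
  then show ?thesis using artin_lower_central_2_eq_3[OF assms(3-5)] by blast
qed

end
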